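(* For each $j$ let $P_j(z,\zeta)$ be a Borel function on $\left(\bigcup_{m=1}^{j-1}K_m\right)\times K_j$, and let $P(z,\zeta)$ be a function on $\left(\bigcup_{m\ge1}K_m\right)\times K_0$. Assume that for each $m$ and each $z\in K_m$ the functions $P_j(z,\cdot)$, $j>m$, are uniformly bounded (in $j$ and $\zeta$) and the sequence $\{P_j(z,\cdot)\}_{j>m}$ has strong limit values $P(z,\cdot)$ with respect to $M$. Let $p>1$ and $\phi\in\mathcal A^p(M)$ with weak limit values $\phi_*$, and suppose $$\phi_m(z)\le\int_{K_j}P_j(z,\zeta)\phi_j(\zeta)\,d\mu_j(\zeta)$$ for all $j$, all $m<j$ and all $z\in K_m$. Then for every $m$ and every $z\in K_m$, $$\phi_m(z)\le\int_{K_0}P(z,\zeta)\phi_*(\zeta)\,d\mu(\zeta).$$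
   Context: $K$ is a compact metric space and $M=\{\mu_j\}_{j\ge1}$ is a sequence of finite positive regular Borel measures on $K$ converging weak-* in $C(K)^*$ (i.e. $\int h\,d\mu_j\to\int h\,d\mu$ for all $h\in C(K)$) to a finite positive Borel measure $\mu$; $K_j=\operatorname{supp}\mu_j$, $K_0=\operatorname{supp}\mu$. A "sequence" $\phi=\{\phi_j\}$ means a sequence of real Borel functions $\phi_j$ on $K_j$ (a sequence indexed by $j>m$ is treated the same way); $\|\phi\|_{L^p(M)}=\limsup_j\|\phi_j\|_{L^p(K_j,\mu_j)}$. $\phi$ has weak limit values $\phi_*$ if $\phi_*$ is $\mu$-integrable on $K_0$ and $\int_{K_j}h\phi_j\,d\mu_j\to\int_{K_0}h\phi_*\,d\mu$ for all $h\in C(K)$; $\mathcal A^p(M)$ is the set of sequences with weak limit values and $\|\phi\|_{L^p(M)}<\infty$. A sequence $\phi$ has strong limit values $\phi^*$ (a real $\mu$-measurable function on $K_0$) if for all real $a<b$ and all $\varepsilon,\delta>0$ there are $j_0$ and an open set $O\subset K$ containing $\{x\in K_0:a\le\phi^*(x)<b\}$ such that $\mu_j(\{x\in K_j:\phi_j(x)<a-\varepsilon\}\cap O)+\mu_j(\{x\in K_j:\phi_j(x)>b+\varepsilon\}\cap O)<\delta$ for all $j\ge j_0$. *)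

theory Defs
  imports "HOL-Analysis.Analysis"
begin

definition msupp :: "'a::metric_space measure \<Rightarrow> 'a set" where
  "msupp N = {x. \<forall>e>0. emeasure N (ball x e) \<noteq> 0}"

definition lp_norm :: "real \<Rightarrow> 'a measure \<Rightarrow> 'a set \<Rightarrow> ('a \<Rightarrow> real) \<Rightarrow> ereal" where
  "lp_norm p N S f =
     (let I = (\<integral>\<^sup>+ x. ennreal (indicator S x * \<bar>f x\<bar> powr p) \<partial>N)
      in if I = \<infinity> then \<infinity> else ereal (enn2real I powr (1 / p)))"

definition lp_norm_seq :: "real \<Rightarrow> (nat \<Rightarrow> 'a::metric_space measure) \<Rightarrow> (nat \<Rightarrow> 'a \<Rightarrow> real) \<Rightarrow> ereal" where
  "lp_norm_seq p \<mu>s \<phi> = limsup (\<lambda>j. lp_norm p (\<mu>s j) (msupp (\<mu>s j)) (\<phi> j))"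

definition has_weak_limit_values ::
  "'a::metric_space set \<Rightarrow> (nat \<Rightarrow> 'a measure) \<Rightarrow> 'a measure \<Rightarrow> (nat \<Rightarrow> 'a \<Rightarrow> real) \<Rightarrow> ('a \<Rightarrow> real) \<Rightarrow> bool" where
  "has_weak_limit_values K \<mu>s \<mu> \<phi> \<phi>s \<longleftrightarrow>
     integrable (completion \<mu>) (\<lambda>x. indicator (msupp \<mu>) x * \<phi>s x) \<and>
     (\<forall>h. continuous_on K h \<longrightarrow>
        (\<lambda>j. \<integral>x. indicator (msupp (\<mu>s j)) x * h x * \<phi> j x \<partial>(\<mu>s j))
          \<longlonglongrightarrow> (\<integral>x. indicator (msupp \<mu>) x * h x * \<phi>s x \<partial>(completion \<mu>)))"

definition in_Ap ::
  "real \<Rightarrow> 'a::metric_space set \<Rightarrow> (nat \<Rightarrow> 'a measure) \<Rightarrow> 'a measure \<Rightarrow> (nat \<Rightarrow> 'a \<Rightarrow> real) \<Rightarrow> bool" where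
  "in_Ap p K \<mu>s \<mu> \<phi> \<longleftrightarrow> (\<exists>\<phi>s. has_weak_limit_values K \<mu>s \<mu> \<phi> \<phi>s) \<and> lp_norm_seq p \<mu>s \<phi> < \<infinity>"

definition has_strong_limit_values ::
  "'a::metric_space set \<Rightarrow> (nat \<Rightarrow> 'a measure) \<Rightarrow> 'a measure \<Rightarrow> nat \<Rightarrow> (nat \<Rightarrow> 'a \<Rightarrow> real) \<Rightarrow> ('a \<Rightarrow> real) \<Rightarrow> bool" where
  "has_strong_limit_values K \<mu>s \<mu> m0 \<psi> \<psi>s \<longleftrightarrow>
     \<psi>s \<in> borel_measurable (restrict_space (completion \<mu>) (msupp \<mu>)) \<and>
     (\<forall>a b \<epsilon> \<delta>. a < b \<and> \<epsilon> > 0 \<and> \<delta> > 0 \<longrightarrow>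
        (\<exists>j0 U. openin (top_of_set K) U \<and> {x \<in> msupp \<mu>. a \<le> \<psi>s x \<and> \<psi>s x < b} \<subseteq> U \<and>
           (\<forall>j\<ge>j0. j > m0 \<longrightarrow>
              measure (\<mu>s j) ({x \<in> msupp (\<mu>s j). \<psi> j x < a - \<epsilon>} \<inter> U)
            + measure (\<mu>s j) ({x \<in> msupp (\<mu>s j). \<psi> j x > b + \<epsilon>} \<inter> U) < \<delta>)))"

end

theory Submission
  imports Defs
begin

(*
  Fix m and z and write P_j = P j z.  We show the stronger fact that the integrals
  X_j = \<integral> P_j \<phi>_j d\<mu>_j converge to W = \<integral> Plim z \<phi>\<^sub>* d\<mu>; the theorem then follows from
  \<phi>_m(z) \<le> X_j for all j > m.  Given \<epsilon> > 0 we replace the kernel by a continuous bounded g: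
  strong limit values yield g with \<mu>_j{|P_j - g| > 2\<eta>} and \<mu>{|Plim z - g| > 3\<eta>} both small
  (the sets are controlled only on open sets, so g is a partition-of-unity interpolation of
  a grid of values).  Then X_j \<approx> \<integral> g \<phi>_j \<rightarrow> \<integral> g \<phi>\<^sub>* \<approx> W: the middle step is the weak convergence
  of \<phi>, and the two errors are small because L^p-bounded families are uniformly integrable
  (for the \<phi>_j) and the single integrable function \<phi>\<^sub>* is absolutely continuous.
*)

section \<open>Supports of measures and closed neighbourhoods\<close>

lemma msupp_closed:
  fixes N :: "'a::metric_space measure"
  assumes sN: "sets N = sets borel"
  shows "closed (msupp N)"
proof -
  have "open (- msupp N)"
    unfolding open_dist
  proof (intro ballI)
    fix x assume "x \<in> - msupp N"
    then obtain e where e: "e > 0" "emeasure N (ball x e) = 0" by (auto simp: msupp_def)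
    show "\<exists>e>0. \<forall>y. dist y x < e \<longrightarrow> y \<in> - msupp N"
    proof (intro exI[of _ e] conjI allI impI)
      fix y assume y: "dist y x < e"
      have "ball y (e - dist y x) \<subseteq> ball x e"
      proof
        fix w assume "w \<in> ball y (e - dist y x)"
        then show "w \<in> ball x e" using dist_triangle[of x w y] dist_commute[of x y] by simp
      qed
      then have "emeasure N (ball y (e - dist y x)) \<le> emeasure N (ball x e)"
        using sN by (intro emeasure_mono) auto
      then have "emeasure N (ball y (e - dist y x)) = 0" using e(2) by simp
      moreover have "e - dist y x > 0" using y by simp
      ultimately show "y \<in> - msupp N" unfolding msupp_def by blast
    qed (use e in auto)
  qed
  then show ?thesis by (simp add: closed_def)
qed

lemma msupp_subset:
  fixes N :: "'a::metric_space measure"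
  assumes sN: "sets N = sets borel" and NK: "emeasure N (- K) = 0" and K: "closed K"
  shows "msupp N \<subseteq> K"
proof
  fix x assume x: "x \<in> msupp N"
  show "x \<in> K"
  proof (rule ccontr)
    assume "x \<notin> K"
    moreover have "open (- K)" using K by (simp add: closed_def)
    ultimately obtain e where e: "e > 0" "ball x e \<subseteq> - K"
      using open_contains_ball by blast
    then have "emeasure N (ball x e) \<le> emeasure N (- K)"
      using sN K by (intro emeasure_mono) auto
    then show False using x e NK by (auto simp: msupp_def)
  qed
qed

text \<open>A measure carried by a compact set gives no mass to the complement of its support:
  the complement is covered by countably many null balls (total boundedness).\<close>
lemma msupp_compl_null:
  fixes N :: "'a::metric_space measure"
  assumes sN: "sets N = sets borel" and NK: "emeasure N (- K) = 0" and K: "compact K"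
  shows "- msupp N \<in> null_sets N"
proof -
  have "\<forall>e>0. \<exists>k. finite k \<and> K \<subseteq> (\<Union>x\<in>k. ball x e)"
    using K compact_eq_totally_bounded by blast
  then have "\<forall>n::nat. \<exists>k. finite k \<and> K \<subseteq> (\<Union>x\<in>k. ball x (1 / Suc n))"
    by simp
  then obtain S where S: "\<And>n. finite (S n)" "\<And>n. K \<subseteq> (\<Union>x\<in>S n. ball x (1 / Suc n))"
    by metis
  define B where "B n = (\<Union>y\<in>{y\<in>S n. emeasure N (ball y (1 / Suc n)) = 0}. ball y (1 / Suc n))" for n
  have "B n \<in> null_sets N" for n
    unfolding B_def by (rule null_sets_UN') (use S(1) sN in \<open>auto intro: countable_finite\<close>)
  moreover have "- K \<in> null_sets N" using NK sN compact_imp_closed[OF K] by (auto simp: null_sets_def)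
  ultimately have null: "- K \<union> (\<Union>n. B n) \<in> null_sets N" by blast
  have cover: "- msupp N \<subseteq> - K \<union> (\<Union>n. B n)"
  proof
    fix x assume "x \<in> - msupp N"
    then obtain e where e: "e > 0" "emeasure N (ball x e) = 0" by (auto simp: msupp_def)
    show "x \<in> - K \<union> (\<Union>n. B n)"
    proof (cases "x \<in> K")
      case True
      obtain n :: nat where n: "1 / Suc n < e / 2"
        using reals_Archimedean[of "e/2"] e(1) by (auto simp: inverse_eq_divide)
      from S(2)[of n] True obtain y where y: "y \<in> S n" "x \<in> ball y (1 / Suc n)" by auto
      have "ball y (1 / Suc n) \<subseteq> ball x e"
      proof
        fix w assume "w \<in> ball y (1 / Suc n)"
        then show "w \<in> ball x e"
          using y(2) n dist_triangle[of x w y] by (simp add: dist_commute)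
      qed
      then have "emeasure N (ball y (1 / Suc n)) \<le> emeasure N (ball x e)"
        using sN by (intro emeasure_mono) auto
      then have "x \<in> B n" using y e(2) unfolding B_def by auto
      then show ?thesis by blast
    qed simp
  qed
  have "- msupp N \<in> sets N"
    using borel_closed[OF msupp_closed[OF sN]] sN sets_eq_imp_space_eq[OF sN] by auto
  then show ?thesis by (rule null_sets_subset[OF null _ cover])
qed

definition closed_nbhd :: "'a::metric_space set \<Rightarrow> real \<Rightarrow> 'a set" where
  "closed_nbhd A r = {x. A \<noteq> {} \<and> infdist x A \<le> r}"

lemma closed_nbhd_closed: "closed (closed_nbhd A r)"
proof (cases "A = {}")
  case False
  then have "closed_nbhd A r = {x. infdist x A \<le> r}" by (simp add: closed_nbhd_def)
  then show ?thesis by (simp add: closed_Collect_le continuous_on_infdist continuous_on_const)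
qed (simp add: closed_nbhd_def)

text \<open>For a finite Borel measure and a closed set A, the closed neighbourhoods of A have
  measure close to that of A (continuity from above).\<close>
lemma measure_closed_nbhd_less:
  fixes M :: "'a::metric_space measure"
  assumes fin: "finite_measure M" and sM: "sets M = sets borel" and A: "closed A"
    and less: "measure M A < \<delta>"
  obtains r where "r > 0" "measure M (closed_nbhd A r) < \<delta>"
proof -
  interpret finite_measure M by (rule fin)
  define F where "F n = closed_nbhd A (1 / Suc n)" for n :: nat
  have rng: "range F \<subseteq> sets M"
    using sM closed_nbhd_closed borel_closed by (auto simp: F_def)
  have dec: "decseq F"
  proof (rule decseq_SucI)
    fix n
    have "1 / real (Suc (Suc n)) \<le> 1 / real (Suc n)" by (intro divide_left_mono) auto
    then show "F (Suc n) \<subseteq> F n" by (auto simp: F_def closed_nbhd_def)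
  qed
  have "(\<Inter>n. F n) = A"
  proof
    show "A \<subseteq> (\<Inter>n. F n)" by (auto simp: F_def closed_nbhd_def)
    show "(\<Inter>n. F n) \<subseteq> A"
    proof
      fix x assume x: "x \<in> (\<Inter>n. F n)"
      then have ne: "A \<noteq> {}" and le: "\<And>n. infdist x A \<le> 1 / Suc n"
        by (auto simp: F_def closed_nbhd_def)
      have "infdist x A \<le> 0"
      proof (rule ccontr)
        assume "\<not> infdist x A \<le> 0"
        then have "infdist x A > 0" by simp
        then obtain n where "inverse (real (Suc n)) < infdist x A"
          using reals_Archimedean by blast
        then show False using le[of n] by (simp add: inverse_eq_divide)
      qed
      then show "x \<in> A"
        using in_closed_iff_infdist_zero[OF A ne] infdist_nonneg[of x A] by simp
    qed
  qed
  then have "(\<lambda>n. measure M (F n)) \<longlonglongrightarrow> measure M A"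
    using finite_Lim_measure_decseq[OF rng dec] by simp
  then have "\<forall>\<^sub>F n in sequentially. measure M (F n) < \<delta>"
    using less by (rule order_tendstoD(2))
  then obtain n where "measure M (F n) < \<delta>"
    by (auto simp: eventually_sequentially)
  then show ?thesis using that[of "1 / Suc n"] by (simp add: F_def)
qed

lemma indicator_open_approx:
  fixes K U :: "'a::metric_space set"
  assumes closed: "closed (K - U)" and ne: "K - U \<noteq> {}" and UK: "U \<subseteq> K"
  shows "(\<lambda>n. indicator K x * min 1 (real n * infdist x (K - U))) \<longlonglongrightarrow> indicator U x"
    and "indicator K x * min 1 (real n * infdist x (K - U)) \<le> indicator U x"
proof -
  show "indicator K x * min 1 (real n * infdist x (K - U)) \<le> indicator U x"
    by (cases "x \<in> U"; cases "x \<in> K") (auto simp: infdist_zero)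
  show "(\<lambda>n. indicator K x * min 1 (real n * infdist x (K - U))) \<longlonglongrightarrow> indicator U x"
  proof (cases "x \<in> U")
    case True
    then have "infdist x (K - U) \<noteq> 0"
      using in_closed_iff_infdist_zero[OF closed ne, of x] by blast
    then have pos: "infdist x (K - U) > 0"
      using infdist_nonneg[of x "K - U"] by linarith
    then obtain n0 :: nat where n0: "real n0 * infdist x (K - U) > 1"
      by (metis reals_Archimedean3)
    have "indicator K x * min 1 (real n * infdist x (K - U)) = indicator U x" if "n \<ge> n0" for n
    proof -
      have "real n0 * infdist x (K - U) \<le> real n * infdist x (K - U)"
        using that pos by (intro mult_right_mono) auto
      then show ?thesis using n0 True UK by auto
    qed
    then show ?thesis
      by (intro tendsto_eventually) (auto simp: eventually_sequentially)
  next
    case False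
    then have "(\<lambda>n. indicator K x * min 1 (real n * infdist x (K - U))) = (\<lambda>n. 0)"
      by (cases "x \<in> K") auto
    then show ?thesis using False by simp
  qed
qed

section \<open>Weakly convergent sequences of measures\<close>

locale weakly_convergent =
  fixes K :: "'a::metric_space set" and \<mu>s :: "nat \<Rightarrow> 'a measure" and \<mu> :: "'a measure"
  assumes K: "compact K"
    and meas_sets: "\<And>j. j \<ge> 1 \<Longrightarrow> sets (\<mu>s j) = sets borel"
    and meas_fin: "\<And>j. j \<ge> 1 \<Longrightarrow> finite_measure (\<mu>s j)"
    and meas_on_K: "\<And>j. j \<ge> 1 \<Longrightarrow> emeasure (\<mu>s j) (- K) = 0"
    and lim_sets: "sets \<mu> = sets borel"
    and lim_fin: "finite_measure \<mu>"
    and lim_on_K: "emeasure \<mu> (- K) = 0"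
    and weak_conv: "\<And>h :: 'a \<Rightarrow> real. continuous_on K h \<Longrightarrow>
        (\<lambda>j. \<integral>x. indicator K x * h x \<partial>(\<mu>s j)) \<longlonglongrightarrow> (\<integral>x. indicator K x * h x \<partial>\<mu>)"
begin

lemma K_closed: "closed K"
  using K compact_imp_closed by blast

lemma measurable_lim: "f \<in> borel_measurable borel \<Longrightarrow> f \<in> borel_measurable \<mu>"
  using measurable_cong_sets[OF lim_sets refl] by blast

lemma measurable_j: "j \<ge> 1 \<Longrightarrow> f \<in> borel_measurable borel \<Longrightarrow> f \<in> borel_measurable (\<mu>s j)"
  using measurable_cong_sets[OF meas_sets refl] by blast

lemma space_j: "j \<ge> 1 \<Longrightarrow> space (\<mu>s j) = UNIV"
  using sets_eq_imp_space_eq[OF meas_sets] by simp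

lemma space_lim: "space \<mu> = UNIV"
  using sets_eq_imp_space_eq[OF lim_sets] by simp

lemma finite_completion: "finite_measure (completion \<mu>)"
proof (rule finite_measureI)
  interpret finite_measure \<mu> by (rule lim_fin)
  show "emeasure (completion \<mu>) (space (completion \<mu>)) \<noteq> \<infinity>" by simp
qed

lemma supp_j:
  assumes "j \<ge> 1"
  shows "msupp (\<mu>s j) \<subseteq> K" "msupp (\<mu>s j) \<in> sets borel" "- msupp (\<mu>s j) \<in> null_sets (\<mu>s j)"
  using msupp_subset[OF meas_sets meas_on_K K_closed] msupp_closed[OF meas_sets]
    msupp_compl_null[OF meas_sets meas_on_K K] assms by auto

lemma supp_lim: "msupp \<mu> \<subseteq> K" "msupp \<mu> \<in> sets borel" "- msupp \<mu> \<in> null_sets \<mu>"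
  using msupp_subset[OF lim_sets lim_on_K K_closed] msupp_closed[OF lim_sets]
    msupp_compl_null[OF lim_sets lim_on_K K] by auto

lemma openin_K:
  assumes "openin (top_of_set K) U" shows "U \<in> sets borel" "U \<subseteq> K" "closed (K - U)"
proof -
  obtain T where T: "open T" "U = K \<inter> T" using assms openin_open by blast
  show "U \<in> sets borel" "U \<subseteq> K" using T K_closed by auto
  have "K - U = K \<inter> - T" using T by auto
  then show "closed (K - U)" using T K_closed by (simp add: closed_Int open_closed)
qed

text \<open>The total masses converge (test function 1).\<close>
lemma mass_tendsto: "(\<lambda>j. measure (\<mu>s j) K) \<longlonglongrightarrow> measure \<mu> K"
proof -
  have "(\<lambda>j. \<integral>x. indicator K x * (\<lambda>_. 1::real) x \<partial>(\<mu>s j)) \<longlonglongrightarrow> (\<integral>x. indicator K x * (\<lambda>_. 1) x \<partial>\<mu>)"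
    by (rule weak_conv) simp
  then have "(\<lambda>j. measure (\<mu>s j) (K \<inter> space (\<mu>s j))) \<longlonglongrightarrow> measure \<mu> K"
    by (simp add: space_lim)
  moreover have "\<forall>\<^sub>F j in sequentially. measure (\<mu>s j) (K \<inter> space (\<mu>s j)) = measure (\<mu>s j) K"
    using eventually_ge_at_top[of 1] by eventually_elim (simp add: space_j)
  ultimately show ?thesis using Lim_transform_eventually by fastforce
qed

lemma eventually_total_mass_le:
  "\<forall>\<^sub>F j in sequentially. measure (\<mu>s j) (space (\<mu>s j)) \<le> measure \<mu> K + 1"
proof -
  have "\<forall>\<^sub>F j in sequentially. measure (\<mu>s j) K < measure \<mu> K + 1"
    using mass_tendsto by (rule order_tendstoD(2)) simp
  then show ?thesis using eventually_ge_at_top[of 1]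
  proof eventually_elim
  case (elim j)
  have sK: "K \<in> sets (\<mu>s j)" "- K \<in> sets (\<mu>s j)" using K_closed meas_sets[OF elim(2)] by auto
  have "measure (\<mu>s j) (space (\<mu>s j)) = measure (\<mu>s j) (K \<union> - K)" using space_j[OF elim(2)] by simp
  also have "\<dots> \<le> measure (\<mu>s j) K + measure (\<mu>s j) (- K)" using sK by (rule measure_Un_le)
  also have "measure (\<mu>s j) (- K) = 0" using meas_on_K[OF elim(2)] by (simp add: measure_def)
  finally show ?case using elim(1) by simp
  qed
qed

text \<open>Portmanteau, open sets: liminf \<mu>s j U \<ge> \<mu> U for U open in K.  The indicator of U is
  approximated from below by the continuous functions min 1 (n \<cdot> dist(\<cdot>, K - U)).\<close>
lemma liminf_open:
  assumes U: "openin (top_of_set K) U" and d: "\<delta> > 0"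
  shows "\<forall>\<^sub>F j in sequentially. measure (\<mu>s j) U > measure \<mu> U - \<delta>"
proof (cases "K - U = {}")
  case True
  then have "U = K" using openin_K(2)[OF U] by auto
  then show ?thesis using mass_tendsto d by (auto intro: order_tendstoD(1))
next
  case False
  note Ub = openin_K[OF U]
  interpret L: finite_measure \<mu> by (rule lim_fin)
  define h where "h n x = min 1 (real n * infdist x (K - U))" for n x
  have hc: "continuous_on UNIV (h n)" for n unfolding h_def by (intro continuous_intros)
  have hm: "h n \<in> borel_measurable borel" for n using hc borel_measurable_continuous_onI by blast
  have "(\<lambda>n. \<integral>x. indicator K x * h n x \<partial>\<mu>) \<longlonglongrightarrow> (\<integral>x. indicator U x \<partial>\<mu>)"
  proof (rule integral_dominated_convergence[where w="\<lambda>_. 1"])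
    show "indicator U \<in> borel_measurable \<mu>" using Ub by (intro measurable_lim) simp
    show "(\<lambda>x. indicator K x * h n x) \<in> borel_measurable \<mu>" for n
      using hm K_closed by (intro measurable_lim borel_measurable_times) auto
    show "AE x in \<mu>. norm (indicator K x * h n x) \<le> 1" for n
      by (auto simp: h_def indicator_def infdist_nonneg)
    show "AE x in \<mu>. (\<lambda>n. indicator K x * h n x) \<longlonglongrightarrow> indicator U x"
      unfolding h_def using indicator_open_approx(1)[OF Ub(3) False Ub(2)] by simp
  qed simp
  then have "(\<lambda>n. \<integral>x. indicator K x * h n x \<partial>\<mu>) \<longlonglongrightarrow> measure \<mu> U"
    by (simp add: space_lim)
  then have "\<forall>\<^sub>F n in sequentially. (\<integral>x. indicator K x * h n x \<partial>\<mu>) > measure \<mu> U - \<delta>/2"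
    by (rule order_tendstoD(1)) (use d in simp)
  then obtain n where n: "(\<integral>x. indicator K x * h n x \<partial>\<mu>) > measure \<mu> U - \<delta>/2"
    by (auto simp: eventually_sequentially)
  have "continuous_on K (h n)" using hc continuous_on_subset by blast
  from order_tendstoD(1)[OF weak_conv[OF this], of "(\<integral>x. indicator K x * h n x \<partial>\<mu>) - \<delta>/2"] d
  have ev: "\<forall>\<^sub>F j in sequentially. (\<integral>x. indicator K x * h n x \<partial>\<mu>s j) > (\<integral>x. indicator K x * h n x \<partial>\<mu>) - \<delta>/2"
    by simp
  show ?thesis
    using ev eventually_ge_at_top[of 1]
  proof eventually_elim
    case (elim j)
    interpret J: finite_measure "\<mu>s j" using meas_fin elim(2) by simp
    have "(\<integral>x. indicator K x * h n x \<partial>\<mu>s j) \<le> (\<integral>x. indicator U x \<partial>\<mu>s j)"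
    proof (rule integral_mono')
      show "integrable (\<mu>s j) (indicator U :: 'a \<Rightarrow> real)"
        using Ub meas_sets[OF elim(2)]
        by (intro integrable_real_indicator) (auto simp: J.emeasure_eq_measure)
      fix x show "indicator K x * h n x \<le> indicator U x"
        unfolding h_def by (rule indicator_open_approx(2)[OF Ub(3) False Ub(2)])
    qed simp
    then show ?case using elim(1) n space_j[OF elim(2)] by simp
  qed
qed

text \<open>Portmanteau, closed sets: limsup \<mu>s j F \<le> \<mu> F, by complementation in K.\<close>
lemma limsup_closed:
  assumes F: "closedin (top_of_set K) F" and d: "\<delta> > 0"
  shows "\<forall>\<^sub>F j in sequentially. measure (\<mu>s j) F < measure \<mu> F + \<delta>"
proof -
  have FK: "F \<subseteq> K" using closedin_imp_subset[OF F] by simp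
  have U: "openin (top_of_set K) (K - F)" using openin_diff[OF openin_topspace F] by simp
  have Fb: "F \<in> sets borel" using closedin_closed_trans[OF F K_closed] by (rule borel_closed)
  interpret L: finite_measure \<mu> by (rule lim_fin)
  have diff: "measure \<mu> (K - F) = measure \<mu> K - measure \<mu> F"
    using FK Fb K_closed lim_sets by (intro L.finite_measure_Diff) auto
  have "\<forall>\<^sub>F j in sequentially. measure (\<mu>s j) (K - F) > measure \<mu> (K - F) - \<delta>/2"
    using liminf_open[OF U] d by simp
  moreover have "\<forall>\<^sub>F j in sequentially. measure (\<mu>s j) K < measure \<mu> K + \<delta>/2"
    using mass_tendsto by (rule order_tendstoD(2)) (use d in simp)
  ultimately show ?thesis using eventually_ge_at_top[of 1]
  proof eventually_elim
    case (elim j)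
    interpret J: finite_measure "\<mu>s j" using meas_fin elim(3) by simp
    have "measure (\<mu>s j) (K - F) = measure (\<mu>s j) K - measure (\<mu>s j) F"
      using FK Fb K_closed meas_sets[OF elim(3)] by (intro J.finite_measure_Diff) auto
    then show ?case using elim diff by linarith
  qed
qed

lemma measure_open_le:
  assumes U: "openin (top_of_set K) U"
    and ev: "\<forall>\<^sub>F j in sequentially. X j \<in> sets borel \<and> msupp (\<mu>s j) \<inter> U \<subseteq> X j \<and> measure (\<mu>s j) (X j) \<le> \<delta>"
  shows "measure \<mu> U \<le> \<delta>"
proof (rule ccontr)
  assume "\<not> ?thesis"
  then have "\<forall>\<^sub>F j in sequentially. measure (\<mu>s j) U > \<delta>"
    using liminf_open[OF U, of "measure \<mu> U - \<delta>"] by simp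
  with ev eventually_ge_at_top[of 1] have "\<forall>\<^sub>F j in sequentially. False"
  proof eventually_elim
    case (elim j)
    interpret J: finite_measure "\<mu>s j" using meas_fin elim(2) .
    have sX: "X j \<in> sets (\<mu>s j)" using elim(1) meas_sets[OF elim(2)] by simp
    have null: "- msupp (\<mu>s j) \<in> null_sets (\<mu>s j)" using supp_j(3)[OF elim(2)] .
    have "U \<subseteq> X j \<union> - msupp (\<mu>s j)" using elim(1) by blast
    then have "measure (\<mu>s j) U \<le> measure (\<mu>s j) (X j \<union> - msupp (\<mu>s j))"
      using sX null by (intro J.finite_measure_mono) auto
    also have "\<dots> = measure (\<mu>s j) (X j)" using sX null by (rule measure_Un_null_set)
    finally show False using elim by linarith
  qed
  then show False by simp
qed

end

section \<open>Continuous interpolation over finitely many open cells\<close>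

definition interpolates :: "'a set \<Rightarrow> nat \<Rightarrow> (nat \<Rightarrow> 'a set) \<Rightarrow> (nat \<Rightarrow> real) \<Rightarrow> ('a \<Rightarrow> real) \<Rightarrow> bool"
  where "interpolates D N U v g \<longleftrightarrow>
    (\<forall>x\<in>D. \<forall>y e. 0 \<le> e \<longrightarrow> (\<forall>i<N. x \<in> U i \<longrightarrow> \<bar>v i - y\<bar> \<le> e) \<longrightarrow> \<bar>g x - y\<bar> \<le> e)"

lemma weighted_mean_close:
  fixes \<rho> v :: "nat \<Rightarrow> real"
  assumes pos: "(\<Sum>i<N. \<rho> i) > 0" and nn: "\<And>i. \<rho> i \<ge> 0"
    and close: "\<And>i. i < N \<Longrightarrow> \<rho> i > 0 \<Longrightarrow> \<bar>v i - y\<bar> \<le> e" and e: "e \<ge> 0"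
  shows "\<bar>(\<Sum>i<N. v i * \<rho> i) / (\<Sum>i<N. \<rho> i) - y\<bar> \<le> e"
proof -
  have "\<bar>(\<Sum>i<N. v i * \<rho> i) - y * (\<Sum>i<N. \<rho> i)\<bar> = \<bar>\<Sum>i<N. (v i - y) * \<rho> i\<bar>"
    by (simp add: sum_distrib_left sum_subtractf algebra_simps)
  also have "\<dots> \<le> (\<Sum>i<N. \<bar>(v i - y) * \<rho> i\<bar>)" by (rule sum_abs)
  also have "\<dots> \<le> (\<Sum>i<N. e * \<rho> i)"
  proof (rule sum_mono)
    fix i assume "i \<in> {..<N}"
    then show "\<bar>(v i - y) * \<rho> i\<bar> \<le> e * \<rho> i"
      using close[of i] nn[of i] by (cases "\<rho> i > 0") (auto simp: abs_mult mult_right_mono)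
  qed
  also have "\<dots> = e * (\<Sum>i<N. \<rho> i)" by (simp add: sum_distrib_left)
  finally have "\<bar>(\<Sum>i<N. v i * \<rho> i) - y * (\<Sum>i<N. \<rho> i)\<bar> / (\<Sum>i<N. \<rho> i) \<le> e"
    using pos by (simp add: divide_le_eq)
  moreover have "(\<Sum>i<N. v i * \<rho> i) / (\<Sum>i<N. \<rho> i) - y
      = ((\<Sum>i<N. v i * \<rho> i) - y * (\<Sum>i<N. \<rho> i)) / (\<Sum>i<N. \<rho> i)"
    using pos by (simp add: field_simps)
  ultimately show ?thesis using pos by (simp add: abs_divide)
qed

definition cell_weight :: "'a::metric_space set \<Rightarrow> 'a set \<Rightarrow> 'a \<Rightarrow> real" where
  "cell_weight K U x = (if K - U = {} then 1 else infdist x (K - U))"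

lemma cell_weight_continuous: "continuous_on A (cell_weight K U)"
  unfolding cell_weight_def by (cases "K - U = {}") (simp_all add: continuous_intros)

lemma cell_weight_nonneg: "cell_weight K U x \<ge> 0"
  by (simp add: cell_weight_def infdist_nonneg)

lemma cell_weight_pos_iff:
  assumes K: "closed K" and U: "openin (top_of_set K) U" and x: "x \<in> K"
  shows "cell_weight K U x > 0 \<longleftrightarrow> x \<in> U"
proof (cases "K - U = {}")
  case False
  have "closedin (top_of_set K) (K - U)"
    using closedin_diff[OF closedin_topspace[of "top_of_set K"] U] by simp
  then have "closed (K - U)" using K closedin_closed_trans by blast
  then have "infdist x (K - U) = 0 \<longleftrightarrow> x \<notin> U"
    using in_closed_iff_infdist_zero[OF _ False] x by blast
  then show ?thesis using False infdist_nonneg[of x "K - U"] by (auto simp: cell_weight_def)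
qed (use x in \<open>auto simp: cell_weight_def\<close>)

text \<open>It is the mean of the values weighted by the
  distances to the complements of the cells, with an extra weight supported near the uncovered
  part.\<close>
lemma continuous_interpolant:
  fixes K :: "'a::metric_space set" and U :: "nat \<Rightarrow> 'a set"
  assumes K: "closed K" and U: "\<And>i. i < N \<Longrightarrow> openin (top_of_set K) (U i)"
    and v: "\<And>i. i < N \<Longrightarrow> \<bar>v i\<bar> \<le> B" and B: "B \<ge> 0" and r: "r > 0"
  obtains g where "continuous_on K g" "g \<in> borel_measurable borel" "\<And>x. \<bar>g x\<bar> \<le> B"
    "interpolates (K - closed_nbhd (K - (\<Union>i<N. U i)) r) N U v g"
proof -
  define A where "A = K - (\<Union>i<N. U i)"
  define w where "w x = (if A = {} then 0 else max 0 (r - infdist x A))" for x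
  define \<rho> where "\<rho> i = cell_weight K (U i)" for i
  define S where "S x = (\<Sum>i<N. \<rho> i x) + w x" for x
  define g where "g x = (\<Sum>i<N. v i * \<rho> i x) / S x" for x
  have w_nn: "w x \<ge> 0" and \<rho>_nn: "\<rho> i x \<ge> 0" for i x
    by (auto simp: w_def \<rho>_def cell_weight_nonneg)
  have \<rho>_pos: "\<rho> i x > 0 \<longleftrightarrow> x \<in> U i" if "x \<in> K" "i < N" for i x
    unfolding \<rho>_def using cell_weight_pos_iff[OF K U[OF that(2)] that(1)] .
  have S_pos: "S x > 0" if x: "x \<in> K" for x
  proof (cases "x \<in> A")
    case True
    then have "w x > 0" using r by (auto simp: w_def)
    then show ?thesis using \<rho>_nn by (simp add: S_def add_nonneg_pos sum_nonneg)
  next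
    case False
    then obtain i where i: "i < N" "x \<in> U i" using x by (auto simp: A_def)
    have "0 < \<rho> i x" using \<rho>_pos[OF x i(1)] i(2) by simp
    also have "\<rho> i x \<le> (\<Sum>i<N. \<rho> i x)" using i(1) \<rho>_nn by (intro member_le_sum) auto
    finally show ?thesis using w_nn[of x] by (simp add: S_def)
  qed
  have \<rho>_cont: "continuous_on UNIV (\<rho> i)" for i by (simp add: \<rho>_def cell_weight_continuous)
  have w_cont: "continuous_on UNIV w"
    unfolding w_def by (cases "A = {}") (simp_all add: continuous_intros)
  have num_cont: "continuous_on UNIV (\<lambda>x. \<Sum>i<N. v i * \<rho> i x)"
    and S_cont: "continuous_on UNIV S"
    unfolding S_def using \<rho>_cont w_cont by (auto intro!: continuous_intros)
  show ?thesis
  proof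
    show "continuous_on K g"
      unfolding g_def using S_pos continuous_on_subset[OF num_cont] continuous_on_subset[OF S_cont]
      by (intro continuous_on_divide) (auto simp: less_le)
    show "g \<in> borel_measurable borel"
      unfolding g_def using num_cont S_cont
      by (intro borel_measurable_divide) (auto intro: borel_measurable_continuous_onI)
    show "\<bar>g x\<bar> \<le> B" for x
    proof (cases "S x = 0")
      case False
      moreover have "S x \<ge> 0" using w_nn \<rho>_nn by (simp add: S_def sum_nonneg)
      ultimately have Sp: "S x > 0" by simp
      have "\<bar>\<Sum>i<N. v i * \<rho> i x\<bar> \<le> (\<Sum>i<N. \<bar>v i\<bar> * \<rho> i x)"
        using sum_abs[of "\<lambda>i. v i * \<rho> i x"] \<rho>_nn by (simp add: abs_mult)
      also have "\<dots> \<le> (\<Sum>i<N. B * \<rho> i x)"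
        using v \<rho>_nn by (intro sum_mono mult_right_mono) auto
      also have "\<dots> \<le> B * S x"
        using B w_nn[of x] by (simp add: S_def sum_distrib_left[symmetric] distrib_left)
      finally show ?thesis using Sp by (simp add: g_def abs_divide divide_le_eq)
    qed (use B in \<open>simp add: g_def\<close>)
    show "interpolates (K - closed_nbhd (K - (\<Union>i<N. U i)) r) N U v g"
      unfolding interpolates_def
    proof (intro ballI allI impI)
      fix x y e
      assume x: "x \<in> K - closed_nbhd (K - (\<Union>i<N. U i)) r" and e: "0 \<le> e"
        and close: "\<forall>i<N. x \<in> U i \<longrightarrow> \<bar>v i - y\<bar> \<le> e"
      have "w x = 0" using x by (auto simp: w_def A_def closed_nbhd_def)
      then have S_eq: "S x = (\<Sum>i<N. \<rho> i x)" by (simp add: S_def)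
      show "\<bar>g x - y\<bar> \<le> e"
        unfolding g_def S_eq
      proof (rule weighted_mean_close)
        show "(\<Sum>i<N. \<rho> i x) > 0" using S_pos[of x] x S_eq by simp
      qed (use x \<rho>_nn close \<rho>_pos e in auto)
    qed
  qed
qed

lemma interval_grid:
  fixes a b \<eta> :: real
  assumes \<eta>: "\<eta> > 0" and ab: "a \<le> b"
  obtains N :: nat and v :: "nat \<Rightarrow> real"
  where "\<And>i. i < N \<Longrightarrow> a < v i \<and> v i \<le> b + \<eta>"
    "\<And>y. a \<le> y \<Longrightarrow> y \<le> b \<Longrightarrow> \<exists>k<N. v k - \<eta> \<le> y \<and> y < v k"
proof
  define v where "v i = a + (real i + 1) * \<eta>" for i :: nat
  define N where "N = nat \<lfloor>(b - a) / \<eta>\<rfloor> + 1"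
  show "a < v i \<and> v i \<le> b + \<eta>" if "i < N" for i
  proof -
    have "0 \<le> \<lfloor>(b - a) / \<eta>\<rfloor>" using ab \<eta> by simp
    then have "int i \<le> \<lfloor>(b - a) / \<eta>\<rfloor>" using that by (simp add: N_def less_Suc_eq_le le_nat_iff)
    then have "real i \<le> (b - a) / \<eta>" by (simp add: le_floor_iff)
    then have "real i * \<eta> \<le> b - a" using \<eta> by (simp add: le_divide_eq)
    moreover have "0 < (real i + 1) * \<eta>" using \<eta> by simp
    ultimately show ?thesis unfolding v_def ring_distribs mult_1 by (intro conjI; linarith)
  qed
  show "\<exists>k<N. v k - \<eta> \<le> y \<and> y < v k" if y: "a \<le> y" "y \<le> b" for y
  proof (intro exI conjI)
    define k where "k = nat \<lfloor>(y - a) / \<eta>\<rfloor>"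
    have q: "real k \<le> (y - a) / \<eta>" "(y - a) / \<eta> < real k + 1"
      using y \<eta> by (simp_all add: k_def)
    then show "v k - \<eta> \<le> y" "y < v k"
      using \<eta> by (simp_all add: v_def le_divide_eq divide_less_eq algebra_simps)
    have "\<lfloor>(y - a) / \<eta>\<rfloor> \<le> \<lfloor>(b - a) / \<eta>\<rfloor>"
      using y \<eta> by (intro floor_mono divide_right_mono) auto
    then show "k < N" using y \<eta> by (simp add: k_def N_def)
  qed
qed

section \<open>Integral estimates\<close>

text \<open>Splitting at height t: |y| \<le> t + t^(1-p) |y|^p, the elementary inequality behind the
  uniform integrability of L^p-bounded families.\<close>
lemma abs_le_powr_split:
  fixes y t p :: real
  assumes t: "t > 0" and p: "p > 1"
  shows "\<bar>y\<bar> \<le> t + t powr (1 - p) * \<bar>y\<bar> powr p"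
proof (cases "\<bar>y\<bar> \<le> t")
  case True
  then show ?thesis by (simp add: add_increasing2)
next
  case False
  then have yt: "\<bar>y\<bar> > t" by simp
  have "\<bar>y\<bar> * t powr (p - 1) \<le> \<bar>y\<bar> * \<bar>y\<bar> powr (p - 1)"
    using yt t p by (intro mult_left_mono powr_mono2) auto
  also have "\<dots> = \<bar>y\<bar> powr p"
    using yt t by (simp add: powr_mult_base)
  finally have "t powr (1 - p) * (\<bar>y\<bar> * t powr (p - 1)) \<le> t powr (1 - p) * \<bar>y\<bar> powr p"
    by (intro mult_left_mono) auto
  moreover have "t powr (1 - p) * (\<bar>y\<bar> * t powr (p - 1)) = \<bar>y\<bar>"
    using t by (simp add: powr_add[symmetric])
  ultimately show ?thesis using t by simp
qed

lemma Lp_set_integral_bound: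
  fixes M :: "'a measure" and f :: "'a \<Rightarrow> real"
  assumes fin: "finite_measure M" and fm: "f \<in> borel_measurable M"
    and ip: "integrable M (\<lambda>x. \<bar>f x\<bar> powr p)" and Q: "(\<integral>x. \<bar>f x\<bar> powr p \<partial>M) \<le> Q"
    and t: "t > 0" and p: "p > 1"
  shows "integrable M f"
    and set_bound: "\<And>B. B \<in> sets M \<Longrightarrow> (\<integral>x. indicator B x * \<bar>f x\<bar> \<partial>M) \<le> t * measure M B + t powr (1 - p) * Q"
    and "(\<integral>x. \<bar>f x\<bar> \<partial>M) \<le> t * measure M (space M) + t powr (1 - p) * Q"
proof -
  interpret finite_measure M by (rule fin)
  have "\<bar>f x\<bar> \<le> 1 + \<bar>f x\<bar> powr p" for x using abs_le_powr_split[of 1 p "f x"] p by simp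
  then have "AE x in M. norm (f x) \<le> norm (1 + \<bar>f x\<bar> powr p)"
    by (auto intro: order.trans[OF _ abs_ge_self])
  then show fi: "integrable M f"
    using Bochner_Integration.integrable_bound[OF _ fm] ip by blast
  show bound: "(\<integral>x. indicator B x * \<bar>f x\<bar> \<partial>M) \<le> t * measure M B + t powr (1 - p) * Q"
    if B: "B \<in> sets M" for B
  proof -
    have iB: "integrable M (indicator B :: 'a \<Rightarrow> real)"
      using B by (intro integrable_real_indicator) (auto simp: emeasure_eq_measure)
    have "(\<integral>x. indicator B x * \<bar>f x\<bar> \<partial>M) \<le> (\<integral>x. t * indicator B x + t powr (1 - p) * \<bar>f x\<bar> powr p \<partial>M)"
    proof (rule integral_mono)
      show "integrable M (\<lambda>x. indicator B x * \<bar>f x\<bar>)"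
        using integrable_real_mult_indicator[OF B integrable_abs[OF fi]] by (simp add: mult.commute)
      show "integrable M (\<lambda>x. t * indicator B x + t powr (1 - p) * \<bar>f x\<bar> powr p)"
        using iB ip by simp
      show "indicator B x * \<bar>f x\<bar> \<le> t * indicator B x + t powr (1 - p) * \<bar>f x\<bar> powr p" for x
        using abs_le_powr_split[OF t p, of "f x"] by (cases "x \<in> B") auto
    qed
    also have "\<dots> = t * measure M B + t powr (1 - p) * (\<integral>x. \<bar>f x\<bar> powr p \<partial>M)"
      using iB ip B by simp
    also have "\<dots> \<le> t * measure M B + t powr (1 - p) * Q"
      using Q by (intro add_left_mono mult_left_mono) auto
    finally show ?thesis .
  qed
  have "(\<integral>x. \<bar>f x\<bar> \<partial>M) = (\<integral>x. indicator (space M) x * \<bar>f x\<bar> \<partial>M)"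
    by (rule Bochner_Integration.integral_cong) auto
  also have "\<dots> \<le> t * measure M (space M) + t powr (1 - p) * Q"
    by (rule bound) simp
  finally show "(\<integral>x. \<bar>f x\<bar> \<partial>M) \<le> t * measure M (space M) + t powr (1 - p) * Q" .
qed

lemma Lp_uniformly_integrable:
  fixes p Q \<kappa> :: real
  assumes p: "p > 1" and Q: "Q \<ge> 0" and \<kappa>: "\<kappa> > 0"
  obtains \<tau> where "\<tau> > 0"
    "\<And>(M :: 'a measure) f B. finite_measure M \<Longrightarrow> f \<in> borel_measurable M \<Longrightarrow>
       integrable M (\<lambda>x. \<bar>f x\<bar> powr p) \<Longrightarrow> (\<integral>x. \<bar>f x\<bar> powr p \<partial>M) \<le> Q \<Longrightarrow>
       B \<in> sets M \<Longrightarrow> measure M B \<le> \<tau> \<Longrightarrow> (\<integral>x. indicator B x * \<bar>f x\<bar> \<partial>M) \<le> \<kappa>"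
proof
  define a where "a = \<kappa> / (2 * (Q + 1))"
  define t where "t = a powr (1 / (1 - p))"
  have a: "a > 0" using \<kappa> Q by (simp add: a_def)
  then have t: "t > 0" by (simp add: t_def)
  have "t powr (1 - p) = a" using a p by (simp add: t_def powr_powr)
  moreover have "a * (Q + 1) = \<kappa> / 2"
    using Q unfolding a_def by (simp add: field_simps add_nonneg_eq_0_iff)
  ultimately have "t powr (1 - p) * (Q + 1) = \<kappa> / 2" by simp
  moreover have "t powr (1 - p) * Q \<le> t powr (1 - p) * (Q + 1)" by (rule mult_left_mono) auto
  ultimately have tQ: "t powr (1 - p) * Q \<le> \<kappa> / 2" by simp
  show "\<kappa> / (2 * t) > 0" using \<kappa> t by simp
  fix M :: "'a measure" and f B
  assume "finite_measure M" "f \<in> borel_measurable M" "integrable M (\<lambda>x. \<bar>f x\<bar> powr p)"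
    "(\<integral>x. \<bar>f x\<bar> powr p \<partial>M) \<le> Q" "B \<in> sets M" and small: "measure M B \<le> \<kappa> / (2 * t)"
  then have "(\<integral>x. indicator B x * \<bar>f x\<bar> \<partial>M) \<le> t * measure M B + t powr (1 - p) * Q"
    using Lp_set_integral_bound(2) t p by blast
  also have "t * measure M B \<le> \<kappa> / 2"
    using mult_left_mono[OF small, of t] t by simp
  finally show "(\<integral>x. indicator B x * \<bar>f x\<bar> \<partial>M) \<le> \<kappa>" using tQ by simp
qed

lemma set_integral_small:
  fixes M :: "'a measure" and f :: "'a \<Rightarrow> real"
  assumes fin: "finite_measure M" and fi: "integrable M f" and e: "e > 0"
  obtains \<delta> where "\<delta> > 0" "\<And>B. B \<in> sets M \<Longrightarrow> measure M B < \<delta> \<Longrightarrow> (\<integral>x. indicator B x * \<bar>f x\<bar> \<partial>M) \<le> e"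
proof -
  interpret finite_measure M by (rule fin)
  have fm: "f \<in> borel_measurable M" using fi by auto
  define s where "s n x = \<bar>f x\<bar> * indicator {x \<in> space M. \<bar>f x\<bar> > real n} x" for n :: nat and x
  have sm: "{x \<in> space M. \<bar>f x\<bar> > real n} \<in> sets M" for n using fm by measurable
  have "(\<lambda>n. \<integral>x. s n x \<partial>M) \<longlonglongrightarrow> (\<integral>x. 0 \<partial>M)"
  proof (rule integral_dominated_convergence[where w="\<lambda>x. \<bar>f x\<bar>"])
    show "s n \<in> borel_measurable M" for n unfolding s_def using fm sm[of n] by measurable
    show "integrable M (\<lambda>x. \<bar>f x\<bar>)" using fi by auto
    show "AE x in M. norm (s n x) \<le> \<bar>f x\<bar>" for n by (auto simp: s_def indicator_def)
    show "AE x in M. (\<lambda>n. s n x) \<longlonglongrightarrow> 0"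
    proof (intro AE_I2)
      fix x
      obtain n0 :: nat where "\<bar>f x\<bar> < real n0" using reals_Archimedean2 by blast
      then have "\<forall>n\<ge>n0. s n x = 0" by (auto simp: s_def indicator_def)
      then show "(\<lambda>n. s n x) \<longlonglongrightarrow> 0"
        by (intro tendsto_eventually) (auto simp: eventually_sequentially)
    qed
  qed simp
  then have "\<forall>\<^sub>F n in sequentially. (\<integral>x. s n x \<partial>M) < e / 2"
    using e by (intro order_tendstoD(2)) auto
  then obtain n0 where n0: "(\<integral>x. s n0 x \<partial>M) < e / 2" by (auto simp: eventually_sequentially)
  define \<delta> where "\<delta> = e / 2 / (real n0 + 1)"
  have isn: "integrable M (s n0)" unfolding s_def
    using integrable_real_mult_indicator[OF sm[of n0] integrable_abs[OF fi]] by (simp add: mult.commute)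
  show ?thesis
  proof
    show "\<delta> > 0" using e by (simp add: \<delta>_def)
    fix B assume B: "B \<in> sets M" "measure M B < \<delta>"
    have iB: "integrable M (indicator B :: 'a \<Rightarrow> real)"
      using B by (intro integrable_real_indicator) (auto simp: emeasure_eq_measure)
    have "(\<integral>x. indicator B x * \<bar>f x\<bar> \<partial>M) \<le> (\<integral>x. real n0 * indicator B x + s n0 x \<partial>M)"
    proof (rule integral_mono)
      show "integrable M (\<lambda>x. indicator B x * \<bar>f x\<bar>)"
        using integrable_real_mult_indicator[OF B(1) integrable_abs[OF fi]] by (simp add: mult.commute)
      show "integrable M (\<lambda>x. real n0 * indicator B x + s n0 x)" using iB isn by auto
      show "indicator B x * \<bar>f x\<bar> \<le> real n0 * indicator B x + s n0 x" if "x \<in> space M" for x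
        using that by (cases "x \<in> B"; cases "\<bar>f x\<bar> > real n0") (auto simp: s_def indicator_def)
    qed
    also have "\<dots> = real n0 * measure M B + (\<integral>x. s n0 x \<partial>M)"
      using iB isn B by (simp add: integral_add)
    also have "real n0 * measure M B \<le> (real n0 + 1) * \<delta>"
      using B by (intro mult_mono) auto
    also have "(real n0 + 1) * \<delta> = e / 2"
      using of_nat_0_le_iff[of n0] unfolding \<delta>_def by (simp add: field_simps add_nonneg_eq_0_iff)
    finally show "(\<integral>x. indicator B x * \<bar>f x\<bar> \<partial>M) \<le> e" using n0 by linarith
  qed
qed

lemma integral_kernel_difference:
  fixes M :: "'a measure" and f P g :: "'a \<Rightarrow> real"
  assumes fi: "integrable M f" and Pm: "P \<in> borel_measurable M" and gm: "g \<in> borel_measurable M"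
    and gb: "\<And>x. \<bar>g x\<bar> \<le> G" and D: "AE x in M. \<bar>P x - g x\<bar> \<le> D" and \<eta>: "\<eta> \<ge> 0"
  shows "integrable M (\<lambda>x. P x * f x)" "integrable M (\<lambda>x. g x * f x)"
    "\<bar>(\<integral>x. P x * f x \<partial>M) - (\<integral>x. g x * f x \<partial>M)\<bar>
       \<le> \<eta> * (\<integral>x. \<bar>f x\<bar> \<partial>M) + D * (\<integral>x. indicator {x \<in> space M. \<bar>P x - g x\<bar> > \<eta>} x * \<bar>f x\<bar> \<partial>M)"
proof -
  define B where "B = {x \<in> space M. \<bar>P x - g x\<bar> > \<eta>}"
  define E where "E x = \<eta> * \<bar>f x\<bar> + D * (indicator B x * \<bar>f x\<bar>)" for x
  have fm: "f \<in> borel_measurable M" using fi by auto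
  have Bs: "B \<in> sets M" unfolding B_def using Pm gm by measurable
  have iBf: "integrable M (\<lambda>x. indicator B x * \<bar>f x\<bar>)"
    using integrable_real_mult_indicator[OF Bs integrable_abs[OF fi]] by (simp add: mult.commute)
  have iE: "integrable M E" unfolding E_def using fi iBf by simp
  have dE: "AE x in M. \<bar>(P x - g x) * f x\<bar> \<le> E x"
    using D AE_space
  proof eventually_elim
    case (elim x)
    have "\<bar>P x - g x\<bar> \<le> \<eta> + D * indicator B x"
      using elim \<eta> by (cases "x \<in> B") (auto simp: B_def indicator_def)
    then have "\<bar>P x - g x\<bar> * \<bar>f x\<bar> \<le> (\<eta> + D * indicator B x) * \<bar>f x\<bar>"
      by (rule mult_right_mono) simp
    also have "\<dots> = E x" by (simp add: E_def algebra_simps)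
    finally show ?case by (simp only: abs_mult)
  qed
  have id: "integrable M (\<lambda>x. (P x - g x) * f x)"
    by (rule Bochner_Integration.integrable_bound[OF iE]) (use Pm gm fm dE in auto)
  have "\<bar>g x * f x\<bar> \<le> \<bar>G * \<bar>f x\<bar>\<bar>" for x
    using mult_right_mono[OF order.trans[OF gb abs_ge_self], of "\<bar>f x\<bar>" x]
    by (simp add: abs_mult)
  then show ig: "integrable M (\<lambda>x. g x * f x)"
    using gm fm by (intro Bochner_Integration.integrable_bound[OF integrable_mult_right[OF integrable_abs[OF fi]]]) auto
  have eq: "(\<lambda>x. P x * f x) = (\<lambda>x. (P x - g x) * f x + g x * f x)" by (simp add: algebra_simps)
  show "integrable M (\<lambda>x. P x * f x)" unfolding eq using id ig by simp
  have "\<bar>(\<integral>x. P x * f x \<partial>M) - (\<integral>x. g x * f x \<partial>M)\<bar> = \<bar>\<integral>x. (P x - g x) * f x \<partial>M\<bar>"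
    unfolding eq using id ig by simp
  also have "\<dots> \<le> (\<integral>x. \<bar>(P x - g x) * f x\<bar> \<partial>M)"
    using integral_norm_bound[of M "\<lambda>x. (P x - g x) * f x"] by simp
  also have "\<dots> \<le> (\<integral>x. E x \<partial>M)"
    using id iE dE by (intro integral_mono_AE) auto
  also have "\<dots> = \<eta> * (\<integral>x. \<bar>f x\<bar> \<partial>M) + D * (\<integral>x. indicator B x * \<bar>f x\<bar> \<partial>M)"
    unfolding E_def using fi iBf by simp
  finally show "\<bar>(\<integral>x. P x * f x \<partial>M) - (\<integral>x. g x * f x \<partial>M)\<bar>
       \<le> \<eta> * (\<integral>x. \<bar>f x\<bar> \<partial>M) + D * (\<integral>x. indicator {x \<in> space M. \<bar>P x - g x\<bar> > \<eta>} x * \<bar>f x\<bar> \<partial>M)"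
    by (simp add: B_def)
qed

lemma lp_norm_integral_bound:
  fixes N :: "'a measure" and f :: "'a \<Rightarrow> real"
  assumes lp: "lp_norm p N S f < ereal L" and p: "p > 1"
    and fm: "(\<lambda>x. indicator S x * f x) \<in> borel_measurable N"
  shows "integrable N (\<lambda>x. \<bar>indicator S x * f x\<bar> powr p)"
    "(\<integral>x. \<bar>indicator S x * f x\<bar> powr p \<partial>N) \<le> L powr p"
proof -
  define I where "I = (\<integral>\<^sup>+ x. ennreal (indicator S x * \<bar>f x\<bar> powr p) \<partial>N)"
  have lp': "(if I = \<infinity> then \<infinity> else ereal (enn2real I powr (1 / p))) < ereal L"
    using lp unfolding lp_norm_def I_def Let_def .
  then have Ifin: "I \<noteq> \<infinity>" by (cases "I = \<infinity>") auto
  with lp' have lt: "enn2real I powr (1 / p) < L" by simp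
  have "indicator S x * \<bar>f x\<bar> powr p = \<bar>indicator S x * f x\<bar> powr p" for x
    by (cases "x \<in> S") auto
  then have I_eq: "I = (\<integral>\<^sup>+ x. ennreal (\<bar>indicator S x * f x\<bar> powr p) \<partial>N)"
    unfolding I_def by simp
  have pm: "(\<lambda>x. \<bar>indicator S x * f x\<bar> powr p) \<in> borel_measurable N" using fm by measurable
  have I_en: "I = ennreal (enn2real I)" using Ifin by (simp add: ennreal_enn2real_if)
  show "integrable N (\<lambda>x. \<bar>indicator S x * f x\<bar> powr p)"
    by (rule integrableI_nn_integral_finite[OF pm _ I_en[unfolded I_eq]]) auto
  have "(\<integral>x. \<bar>indicator S x * f x\<bar> powr p \<partial>N) = enn2real I"
    unfolding I_eq using pm by (intro integral_eq_nn_integral) auto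
  also have "\<dots> = (enn2real I powr (1 / p)) powr p"
    using p by (simp add: powr_powr)
  also have "\<dots> \<le> L powr p"
    using lt p by (intro powr_mono2) auto
  finally show "(\<integral>x. \<bar>indicator S x * f x\<bar> powr p \<partial>N) \<le> L powr p" .
qed

section \<open>A bounded kernel with strong limit values\<close>

locale strong_kernel = weakly_convergent +
  fixes m :: nat and Pz :: "nat \<Rightarrow> 'a::metric_space \<Rightarrow> real" and Pl :: "'a \<Rightarrow> real" and C :: real
  assumes C: "C \<ge> 0"
    and Pz_bound: "\<And>j x. j > m \<Longrightarrow> x \<in> msupp (\<mu>s j) \<Longrightarrow> \<bar>Pz j x\<bar> \<le> C"
    and strong: "has_strong_limit_values K \<mu>s \<mu> m Pz Pl"
    and Pz_meas: "\<And>j. j > m \<Longrightarrow> Pz j \<in> borel_measurable (restrict_space borel (msupp (\<mu>s j)))"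
begin

lemma Pz_ind_meas:
  assumes "j > m"
  shows "(\<lambda>x. indicator (msupp (\<mu>s j)) x * Pz j x) \<in> borel_measurable borel"
proof -
  have "msupp (\<mu>s j) \<inter> space borel \<in> sets borel" using supp_j(2)[of j] assms by simp
  from borel_measurable_restrict_space_iff[OF this, of "Pz j"] Pz_meas[OF assms]
  show ?thesis by simp
qed

lemma Pz_sets:
  assumes "j > m"
  shows "{x \<in> msupp (\<mu>s j). Pz j x < c} \<in> sets borel" "{x \<in> msupp (\<mu>s j). Pz j x > c} \<in> sets borel"
proof -
  have [measurable]: "(\<lambda>x. indicator (msupp (\<mu>s j)) x * Pz j x) \<in> borel_measurable borel"
    using Pz_ind_meas[OF assms] .
  have [measurable]: "msupp (\<mu>s j) \<in> sets borel" using supp_j(2)[of j] assms by simp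
  have "{x \<in> msupp (\<mu>s j). Pz j x < c} = {x \<in> space borel. indicator (msupp (\<mu>s j)) x * Pz j x < c} \<inter> msupp (\<mu>s j)"
    "{x \<in> msupp (\<mu>s j). Pz j x > c} = {x \<in> space borel. indicator (msupp (\<mu>s j)) x * Pz j x > c} \<inter> msupp (\<mu>s j)"
    by auto
  then show "{x \<in> msupp (\<mu>s j). Pz j x < c} \<in> sets borel" "{x \<in> msupp (\<mu>s j). Pz j x > c} \<in> sets borel"
    by (simp_all only:) measurable
qed

lemma Pl_ind_meas: "(\<lambda>x. indicator (msupp \<mu>) x * Pl x) \<in> borel_measurable (completion \<mu>)"
proof -
  have "msupp \<mu> \<inter> space (completion \<mu>) \<in> sets (completion \<mu>)"
    using supp_lim(2) lim_sets by simp
  from borel_measurable_restrict_space_iff[OF this, of Pl] strong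
  show ?thesis unfolding has_strong_limit_values_def by simp
qed

lemma Pl_sets:
  assumes "A \<in> sets borel"
  shows "{x \<in> msupp \<mu>. Pl x \<in> A} \<in> sets (completion \<mu>)"
proof -
  have [measurable]: "(\<lambda>x. indicator (msupp \<mu>) x * Pl x) \<in> borel_measurable (completion \<mu>)"
    by (rule Pl_ind_meas)
  have [measurable]: "msupp \<mu> \<in> sets (completion \<mu>)" using supp_lim(2) lim_sets by simp
  have [measurable]: "A \<in> sets borel" by fact
  have "{x \<in> msupp \<mu>. Pl x \<in> A} = {x \<in> space (completion \<mu>). indicator (msupp \<mu>) x * Pl x \<in> A} \<inter> msupp \<mu>"
    using space_lim by auto
  also have "\<dots> \<in> sets (completion \<mu>)" by measurable
  finally show ?thesis .
qed

lemma strongD: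
  assumes "a < b" "\<epsilon> > 0" "\<delta> > 0"
  obtains j0 U where "openin (top_of_set K) U" "{x \<in> msupp \<mu>. a \<le> Pl x \<and> Pl x < b} \<subseteq> U"
    "\<And>j. j \<ge> j0 \<Longrightarrow> j > m \<Longrightarrow>
       measure (\<mu>s j) ({x \<in> msupp (\<mu>s j). Pz j x < a - \<epsilon>} \<inter> U)
     + measure (\<mu>s j) ({x \<in> msupp (\<mu>s j). Pz j x > b + \<epsilon>} \<inter> U) < \<delta>"
  using strong assms unfolding has_strong_limit_values_def by blast

lemma null_level_set:
  assumes avoid: "\<And>j x. j > m \<Longrightarrow> x \<in> msupp (\<mu>s j) \<Longrightarrow> Pz j x < a - 1/2 \<or> Pz j x > b + 1/2"
  shows "{x \<in> msupp \<mu>. a \<le> Pl x \<and> Pl x < b} \<in> null_sets (completion \<mu>)"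
proof -
  define E where "E = {x \<in> msupp \<mu>. a \<le> Pl x \<and> Pl x < b}"
  interpret LC: finite_measure "completion \<mu>" by (rule finite_completion)
  have Em: "E \<in> sets (completion \<mu>)"
    using Pl_sets[of "{a..<b}"] unfolding E_def by auto
  have "measure (completion \<mu>) E \<le> \<delta>" if d: "\<delta> > 0" for \<delta>
  proof (cases "a < b")
    case False
    then have "E = {}" unfolding E_def by auto
    then show ?thesis using d by simp
  next
    case True
    obtain j0 U where U: "openin (top_of_set K) U" "E \<subseteq> U"
      and j0: "\<And>j. j \<ge> j0 \<Longrightarrow> j > m \<Longrightarrow>
        measure (\<mu>s j) ({x \<in> msupp (\<mu>s j). Pz j x < a - 1/2} \<inter> U)
      + measure (\<mu>s j) ({x \<in> msupp (\<mu>s j). Pz j x > b + 1/2} \<inter> U) < \<delta>"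
      unfolding E_def by (rule strongD[of a b "1/2" \<delta>]) (use True d in auto)
    define X where "X j = ({x \<in> msupp (\<mu>s j). Pz j x < a - 1/2} \<inter> U) \<union>
      ({x \<in> msupp (\<mu>s j). Pz j x > b + 1/2} \<inter> U)" for j
    have Ub: "U \<in> sets borel" using openin_K[OF U(1)] by simp
    have "measure \<mu> U \<le> \<delta>"
    proof (rule measure_open_le[OF U(1), where X=X])
      show "\<forall>\<^sub>F j in sequentially. X j \<in> sets borel \<and> msupp (\<mu>s j) \<inter> U \<subseteq> X j \<and> measure (\<mu>s j) (X j) \<le> \<delta>"
        using eventually_ge_at_top[of "j0 + m + 1"]
      proof eventually_elim
        case (elim j)
        then have jm: "j > m" "j \<ge> j0" "j \<ge> 1" by auto
        have s: "{x \<in> msupp (\<mu>s j). Pz j x < a - 1/2} \<inter> U \<in> sets borel"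
          "{x \<in> msupp (\<mu>s j). Pz j x > b + 1/2} \<inter> U \<in> sets borel"
          using Pz_sets[OF jm(1)] Ub by blast+
        have "measure (\<mu>s j) (X j) \<le>
            measure (\<mu>s j) ({x \<in> msupp (\<mu>s j). Pz j x < a - 1/2} \<inter> U)
          + measure (\<mu>s j) ({x \<in> msupp (\<mu>s j). Pz j x > b + 1/2} \<inter> U)"
          unfolding X_def using s meas_sets[OF jm(3)] by (intro measure_Un_le) auto
        also have "\<dots> < \<delta>" using j0[OF jm(2) jm(1)] .
        finally show ?case using s avoid[OF jm(1)] by (auto simp: X_def)
      qed
    qed
    moreover have "measure (completion \<mu>) E \<le> measure (completion \<mu>) U"
      using U(2) Ub lim_sets by (intro LC.finite_measure_mono) auto
    ultimately show ?thesis using Ub lim_sets by simp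
  qed
  then have "measure (completion \<mu>) E = 0"
    using field_le_epsilon[of "measure (completion \<mu>) E" 0] by (simp add: measure_nonneg antisym)
  then show ?thesis using Em unfolding E_def by (auto simp: null_sets_def LC.emeasure_eq_measure)
qed

lemma Pl_bound_ae: "{x \<in> msupp \<mu>. \<not> \<bar>Pl x\<bar> \<le> C + 1} \<in> null_sets (completion \<mu>)"
proof -
  define Ep where "Ep n = {x \<in> msupp \<mu>. C + 1 \<le> Pl x \<and> Pl x < real n}" for n :: nat
  define Em where "Em n = {x \<in> msupp \<mu>. - real n \<le> Pl x \<and> Pl x < - C - 1}" for n :: nat
  have "Ep n \<in> null_sets (completion \<mu>)" "Em n \<in> null_sets (completion \<mu>)" for n
    unfolding Ep_def Em_def
    by (rule null_level_set; use Pz_bound in \<open>fastforce simp: abs_le_iff\<close>)+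
  then have "(\<Union>n. Ep n) \<union> (\<Union>n. Em n) \<in> null_sets (completion \<mu>)" by blast
  moreover have "{x \<in> msupp \<mu>. \<not> \<bar>Pl x\<bar> \<le> C + 1} \<subseteq> (\<Union>n. Ep n) \<union> (\<Union>n. Em n)"
  proof
    fix x assume x: "x \<in> {x \<in> msupp \<mu>. \<not> \<bar>Pl x\<bar> \<le> C + 1}"
    obtain n :: nat where n: "\<bar>Pl x\<bar> < real n" using reals_Archimedean2 by blast
    then have "x \<in> Ep n \<or> x \<in> Em n" using x unfolding Ep_def Em_def by auto
    then show "x \<in> (\<Union>n. Ep n) \<union> (\<Union>n. Em n)" by blast
  qed
  ultimately show ?thesis using completion.complete2 by blast
qed

end

section \<open>Continuous approximation of the kernel\<close>

locale kernel_cells = strong_kernel +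
  fixes N :: nat and v :: "nat \<Rightarrow> real" and \<eta> \<delta> :: real
    and U :: "nat \<Rightarrow> 'a::metric_space set" and j0 :: "nat \<Rightarrow> nat"
  assumes \<eta>: "\<eta> > 0" and \<delta>: "\<delta> > 0"
    and grid: "\<And>y. \<bar>y\<bar> \<le> C + 1 \<Longrightarrow> \<exists>k<N. v k - \<eta> \<le> y \<and> y < v k"
    and cell_open: "\<And>i. i < N \<Longrightarrow> openin (top_of_set K) (U i)"
    and cell_cover: "\<And>i. i < N \<Longrightarrow> {x \<in> msupp \<mu>. v i - \<eta> \<le> Pl x \<and> Pl x < v i} \<subseteq> U i"
    and cell_small: "\<And>i j. i < N \<Longrightarrow> j \<ge> j0 i \<Longrightarrow> j > m \<Longrightarrow>
        measure (\<mu>s j) ({x \<in> msupp (\<mu>s j). Pz j x < v i - \<eta> - \<eta>/4} \<inter> U i)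
      + measure (\<mu>s j) ({x \<in> msupp (\<mu>s j). Pz j x > v i + \<eta>/4} \<inter> U i) < \<delta>"
begin

definition bad :: "nat \<Rightarrow> nat \<Rightarrow> 'a set" where
  "bad i j = ({x \<in> msupp (\<mu>s j). Pz j x < v i - \<eta> - \<eta>/4} \<inter> U i)
    \<union> ({x \<in> msupp (\<mu>s j). Pz j x > v i + \<eta>/4} \<inter> U i)"

lemma bad_sets: "i < N \<Longrightarrow> j > m \<Longrightarrow> bad i j \<in> sets borel"
  unfolding bad_def using Pz_sets openin_K(1)[OF cell_open] by blast

lemma bad_measure:
  assumes "i < N" "j > m" "j \<ge> j0 i"
  shows "measure (\<mu>s j) (bad i j) < \<delta>"
proof -
  have "j \<ge> 1" using assms by simp
  then have "measure (\<mu>s j) (bad i j) \<le> measure (\<mu>s j) ({x \<in> msupp (\<mu>s j). Pz j x < v i - \<eta> - \<eta>/4} \<inter> U i)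
      + measure (\<mu>s j) ({x \<in> msupp (\<mu>s j). Pz j x > v i + \<eta>/4} \<inter> U i)"
    unfolding bad_def using Pz_sets[OF assms(2)] openin_K(1)[OF cell_open[OF assms(1)]] meas_sets
    by (intro measure_Un_le) auto
  also have "\<dots> < \<delta>" using cell_small assms by blast
  finally show ?thesis .
qed

lemma notin_bad:
  "x \<in> msupp (\<mu>s j) \<Longrightarrow> x \<in> U i \<Longrightarrow> x \<notin> bad i j \<Longrightarrow> v i - \<eta> - \<eta>/4 \<le> Pz j x \<and> Pz j x \<le> v i + \<eta>/4"
  unfolding bad_def by auto

lemma cell_of_point:
  assumes "x \<in> msupp \<mu>" "\<bar>Pl x\<bar> \<le> C + 1"
  obtains k where "k < N" "x \<in> U k" "v k - \<eta> \<le> Pl x" "Pl x < v k"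
  using grid[OF assms(2)] cell_cover assms(1) by blast

lemma uncovered_null: "measure \<mu> (K - (\<Union>i<N. U i)) = 0"
proof -
  have "K - (\<Union>i<N. U i) \<subseteq> - msupp \<mu> \<union> {x \<in> msupp \<mu>. \<not> \<bar>Pl x\<bar> \<le> C + 1}"
    by (auto elim: cell_of_point)
  moreover have "- msupp \<mu> \<union> {x \<in> msupp \<mu>. \<not> \<bar>Pl x\<bar> \<le> C + 1} \<in> null_sets (completion \<mu>)"
    using null_sets_completionI[OF supp_lim(3)] Pl_bound_ae by blast
  ultimately have "K - (\<Union>i<N. U i) \<in> null_sets (completion \<mu>)"
    using completion.complete2 by blast
  moreover have "K - (\<Union>i<N. U i) \<in> sets \<mu>"
    using K_closed openin_K(1)[OF cell_open] lim_sets by auto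
  ultimately show ?thesis using null_sets_completion_iff measure_eq_0_null_sets by blast
qed

lemma approximation_j:
  assumes F: "closedin (top_of_set K) F" and g: "interpolates (K - F) N U v g"
  shows "\<forall>\<^sub>F j in sequentially.
    measure (\<mu>s j) {x \<in> msupp (\<mu>s j). \<bar>Pz j x - g x\<bar> > 2*\<eta>} \<le> measure \<mu> F + (real N + 1) * \<delta>"
  using limsup_closed[OF F \<delta>] eventually_ge_at_top[of "(\<Sum>i<N. j0 i) + m + 1"]
proof eventually_elim
  case (elim j)
  have jm: "j > m" "j \<ge> 1" using elim(2) by auto
  have jj0: "j \<ge> j0 i" if "i < N" for i
    using member_le_sum[of i "{..<N}" j0] that elim(2) by auto
  interpret J: finite_measure "\<mu>s j" using meas_fin jm(2) .
  have Fb: "F \<in> sets (\<mu>s j)"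
    using closedin_closed_trans[OF F K_closed] meas_sets[OF jm(2)] by simp
  have badb: "(\<Union>i<N. bad i j) \<in> sets (\<mu>s j)"
    using bad_sets[OF _ jm(1)] meas_sets[OF jm(2)] by auto
  have "{x \<in> msupp (\<mu>s j). \<bar>Pz j x - g x\<bar> > 2*\<eta>} \<subseteq> F \<union> (\<Union>i<N. bad i j)"
  proof (rule subsetI, rule ccontr)
    fix x assume x: "x \<in> {x \<in> msupp (\<mu>s j). \<bar>Pz j x - g x\<bar> > 2*\<eta>}" "x \<notin> F \<union> (\<Union>i<N. bad i j)"
    have "x \<in> K - F" using x supp_j(1)[OF jm(2)] by auto
    moreover have "\<forall>i<N. x \<in> U i \<longrightarrow> \<bar>v i - Pz j x\<bar> \<le> 2*\<eta>"
      using notin_bad[of x j] x \<eta> by force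
    ultimately have "\<bar>g x - Pz j x\<bar> \<le> 2*\<eta>" using g \<eta> unfolding interpolates_def by simp
    then show False using x by (simp add: abs_minus_commute)
  qed
  then have "measure (\<mu>s j) {x \<in> msupp (\<mu>s j). \<bar>Pz j x - g x\<bar> > 2*\<eta>} \<le> measure (\<mu>s j) (F \<union> (\<Union>i<N. bad i j))"
    using Fb badb by (intro J.finite_measure_mono) auto
  also have "\<dots> \<le> measure (\<mu>s j) F + (\<Sum>i<N. measure (\<mu>s j) (bad i j))"
    using measure_Un_le[OF Fb badb] measure_UNION_le[of "{..<N}" "\<lambda>i. bad i j" "\<mu>s j"]
      bad_sets[OF _ jm(1)] meas_sets[OF jm(2)] by force
  also have "(\<Sum>i<N. measure (\<mu>s j) (bad i j)) \<le> real N * \<delta>"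
    using sum_bounded_above[of "{..<N}" "\<lambda>i. measure (\<mu>s j) (bad i j)" \<delta>]
      bad_measure[OF _ jm(1) jj0] by (force intro: less_imp_le)
  finally show ?case using elim(1) by (simp add: algebra_simps)
qed

text \<open>Cells with values more than 2\<eta> apart overlap only in a set of measure \<le> 2\<delta>, since there
  Pz j cannot be close to both values.\<close>
lemma far_cells_overlap:
  assumes ik: "i < N" "k < N" and far: "\<bar>v i - v k\<bar> > 2*\<eta>"
  shows "measure \<mu> (U i \<inter> U k) \<le> 2 * \<delta>"
proof (rule measure_open_le[where X="\<lambda>j. bad i j \<union> bad k j"])
  show "openin (top_of_set K) (U i \<inter> U k)" using cell_open ik by blast
  show "\<forall>\<^sub>F j in sequentially. bad i j \<union> bad k j \<in> sets borel \<and>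
      msupp (\<mu>s j) \<inter> (U i \<inter> U k) \<subseteq> bad i j \<union> bad k j \<and> measure (\<mu>s j) (bad i j \<union> bad k j) \<le> 2 * \<delta>"
    using eventually_ge_at_top[of "j0 i + j0 k + m + 1"]
  proof eventually_elim
    case (elim j)
    then have jm: "j > m" "j \<ge> 1" "j \<ge> j0 i" "j \<ge> j0 k" by auto
    have s: "bad i j \<in> sets borel" "bad k j \<in> sets borel" using bad_sets ik jm(1) by auto
    have "measure (\<mu>s j) (bad i j \<union> bad k j) \<le> measure (\<mu>s j) (bad i j) + measure (\<mu>s j) (bad k j)"
      using s meas_sets[OF jm(2)] by (intro measure_Un_le) auto
    also have "\<dots> \<le> 2 * \<delta>" using bad_measure[OF ik(1) jm(1,3)] bad_measure[OF ik(2) jm(1,4)] by simp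
    finally have "measure (\<mu>s j) (bad i j \<union> bad k j) \<le> 2 * \<delta>" .
    moreover have "msupp (\<mu>s j) \<inter> (U i \<inter> U k) \<subseteq> bad i j \<union> bad k j"
      using notin_bad[of _ j i] notin_bad[of _ j k] far \<eta> by fastforce
    ultimately show ?case using s by blast
  qed
qed

text \<open>Approximation in the limit: off F, an interpolant of the grid values is within 3\<eta> of Pl
  except on the overlaps of far-apart cells and a null set.\<close>
lemma approximation_lim:
  assumes F: "F \<in> sets borel" and g: "interpolates (K - F) N U v g"
  shows "measure (completion \<mu>) {x \<in> msupp \<mu>. \<bar>Pl x - g x\<bar> > 3*\<eta>} \<le> measure \<mu> F + real N * real N * (2 * \<delta>)"
proof -
  interpret LC: finite_measure "completion \<mu>" by (rule finite_completion)
  define Nt where "Nt = {x \<in> msupp \<mu>. \<not> \<bar>Pl x\<bar> \<le> C + 1}"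
  define Far where "Far = {p \<in> {..<N} \<times> {..<N}. \<bar>v (fst p) - v (snd p)\<bar> > 2*\<eta>}"
  define W where "W = (\<Union>p\<in>Far. U (fst p) \<inter> U (snd p))"
  have Nt: "Nt \<in> null_sets (completion \<mu>)" unfolding Nt_def by (rule Pl_bound_ae)
  have Far_fin: "finite Far" and Far_card: "card Far \<le> N * N"
    unfolding Far_def using card_mono[of "{..<N} \<times> {..<N}"] by (auto simp: card_cartesian_product)
  have cells: "U (fst p) \<inter> U (snd p) \<in> sets borel" if "p \<in> Far" for p
    using that openin_K(1)[OF cell_open] by (auto simp: Far_def)
  then have Ws: "W \<in> sets borel" unfolding W_def using Far_fin by auto
  have "measure \<mu> W \<le> (\<Sum>p\<in>Far. measure \<mu> (U (fst p) \<inter> U (snd p)))"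
    unfolding W_def using Far_fin cells lim_sets by (intro measure_UNION_le) auto
  also have "\<dots> \<le> real (card Far) * (2 * \<delta>)"
    using far_cells_overlap by (intro sum_bounded_above) (auto simp: Far_def)
  also have "\<dots> \<le> real N * real N * (2 * \<delta>)"
    using Far_card \<delta> by (intro mult_right_mono) (auto simp flip: of_nat_mult)
  finally have W_meas: "measure \<mu> W \<le> real N * real N * (2 * \<delta>)" .
  have "{x \<in> msupp \<mu>. \<bar>Pl x - g x\<bar> > 3*\<eta>} \<subseteq> Nt \<union> F \<union> W"
  proof (rule subsetI, rule ccontr)
    fix x assume x: "x \<in> {x \<in> msupp \<mu>. \<bar>Pl x - g x\<bar> > 3*\<eta>}" "x \<notin> Nt \<union> F \<union> W"
    then have xS: "x \<in> msupp \<mu>" and "\<bar>Pl x\<bar> \<le> C + 1" by (auto simp: Nt_def)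
    then obtain k where k: "k < N" "x \<in> U k" "v k - \<eta> \<le> Pl x" "Pl x < v k" by (rule cell_of_point)
    have "\<bar>v i - Pl x\<bar> \<le> 3*\<eta>" if "i < N" "x \<in> U i" for i
    proof -
      have "(i, k) \<notin> Far" using x(2) that k unfolding W_def by auto
      then have "\<bar>v i - v k\<bar> \<le> 2*\<eta>" using that k by (auto simp: Far_def)
      then show ?thesis using k by linarith
    qed
    moreover have "x \<in> K - F" using x supp_lim(1) by auto
    ultimately have "\<bar>g x - Pl x\<bar> \<le> 3*\<eta>" using g \<eta> unfolding interpolates_def by simp
    then show False using x by (simp add: abs_minus_commute)
  qed
  then have "measure (completion \<mu>) {x \<in> msupp \<mu>. \<bar>Pl x - g x\<bar> > 3*\<eta>} \<le> measure (completion \<mu>) (Nt \<union> (F \<union> W))"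
    using Nt F Ws lim_sets by (intro LC.finite_measure_mono) (auto simp: Un_assoc)
  also have "\<dots> = measure (completion \<mu>) (F \<union> W)"
    using Nt F Ws lim_sets by (subst Un_commute, intro measure_Un_null_set) auto
  also have "\<dots> \<le> measure \<mu> F + measure \<mu> W"
    using measure_Un_le[of F "completion \<mu>" W] F Ws lim_sets by simp
  finally show ?thesis using W_meas by simp
qed

end

context strong_kernel
begin

lemma exists_cells:
  assumes \<eta>: "\<eta> > 0" and \<delta>: "\<delta> > 0"
    and grid: "\<And>y. \<bar>y\<bar> \<le> C + 1 \<Longrightarrow> \<exists>k<N. v k - \<eta> \<le> y \<and> y < v k"
  obtains U j0 where "kernel_cells K \<mu>s \<mu> m Pz Pl C N v \<eta> \<delta> U j0"
proof -
  have ex: "\<forall>i. \<exists>j0 U. openin (top_of_set K) U \<and> {x \<in> msupp \<mu>. v i - \<eta> \<le> Pl x \<and> Pl x < v i} \<subseteq> U \<and>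
      (\<forall>j. j \<ge> j0 \<longrightarrow> j > m \<longrightarrow>
        measure (\<mu>s j) ({x \<in> msupp (\<mu>s j). Pz j x < v i - \<eta> - \<eta>/4} \<inter> U)
      + measure (\<mu>s j) ({x \<in> msupp (\<mu>s j). Pz j x > v i + \<eta>/4} \<inter> U) < \<delta>)"
    (is "\<forall>i. ?E i")
  proof
    fix i
    show "?E i" by (rule strongD[of "v i - \<eta>" "v i" "\<eta>/4" \<delta>]) (use \<eta> \<delta> in \<open>auto\<close>)
  qed
  obtain j0 where "\<forall>i. \<exists>U. openin (top_of_set K) U \<and> {x \<in> msupp \<mu>. v i - \<eta> \<le> Pl x \<and> Pl x < v i} \<subseteq> U \<and>
      (\<forall>j. j \<ge> j0 i \<longrightarrow> j > m \<longrightarrow>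
        measure (\<mu>s j) ({x \<in> msupp (\<mu>s j). Pz j x < v i - \<eta> - \<eta>/4} \<inter> U)
      + measure (\<mu>s j) ({x \<in> msupp (\<mu>s j). Pz j x > v i + \<eta>/4} \<inter> U) < \<delta>)"
    using choice[OF ex] by blast
  from choice[OF this] obtain U where cells: "\<And>i. openin (top_of_set K) (U i)"
    "\<And>i. {x \<in> msupp \<mu>. v i - \<eta> \<le> Pl x \<and> Pl x < v i} \<subseteq> U i"
    "\<And>i j. j \<ge> j0 i \<Longrightarrow> j > m \<Longrightarrow>
        measure (\<mu>s j) ({x \<in> msupp (\<mu>s j). Pz j x < v i - \<eta> - \<eta>/4} \<inter> U i)
      + measure (\<mu>s j) ({x \<in> msupp (\<mu>s j). Pz j x > v i + \<eta>/4} \<inter> U i) < \<delta>"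
    by blast
  show ?thesis
  proof (rule that, rule kernel_cells.intro)
    show "strong_kernel K \<mu>s \<mu> m Pz Pl C" by intro_locales
    show "kernel_cells_axioms K \<mu>s \<mu> m Pz Pl C N v \<eta> \<delta> U j0"
      by (rule kernel_cells_axioms.intro) (use \<eta> \<delta> grid cells in auto)
  qed
qed

text \<open>The grid cells and their open sets
  come from the strong limit values; g interpolates the grid values off a thin closed
  neighbourhood of the (null) uncovered part of K.\<close>
lemma continuous_approximation:
  assumes \<eta>: "0 < \<eta>" "\<eta> \<le> 1" and \<tau>: "\<tau> > 0"
  obtains g where "continuous_on K g" "g \<in> borel_measurable borel" "\<And>x. \<bar>g x\<bar> \<le> C + 2"
    "\<forall>\<^sub>F j in sequentially. measure (\<mu>s j) {x \<in> msupp (\<mu>s j). \<bar>Pz j x - g x\<bar> > 2*\<eta>} \<le> \<tau>"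
    "measure (completion \<mu>) {x \<in> msupp \<mu>. \<bar>Pl x - g x\<bar> > 3*\<eta>} \<le> \<tau>"
proof -
  interpret L: finite_measure \<mu> by (rule lim_fin)
  obtain N :: nat and v :: "nat \<Rightarrow> real" where v_range: "\<And>i. i < N \<Longrightarrow> - C - 1 < v i \<and> v i \<le> C + 1 + \<eta>"
    and v_cover: "\<And>y. - C - 1 \<le> y \<Longrightarrow> y \<le> C + 1 \<Longrightarrow> \<exists>k<N. v k - \<eta> \<le> y \<and> y < v k"
  proof (rule interval_grid[OF \<eta>(1), of "- C - 1" "C + 1"])
    show "- C - 1 \<le> C + 1" using C by simp
  qed (rule that; assumption)
  define \<delta> where "\<delta> = \<tau> / (2 * real N * real N + real N + 2)"
  have "0 \<le> 2 * real N * real N + real N" by simp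
  then have den: "2 * real N * real N + real N + 2 > 0" by linarith
  then have \<delta>: "\<delta> > 0" and \<delta>_mult: "\<delta> * (2 * real N * real N + real N + 2) = \<tau>"
    using \<tau> by (simp_all add: \<delta>_def)
  have "\<exists>k<N. v k - \<eta> \<le> y \<and> y < v k" if "\<bar>y\<bar> \<le> C + 1" for y
    using v_cover that by (simp add: abs_le_iff)
  then obtain U j0 where "kernel_cells K \<mu>s \<mu> m Pz Pl C N v \<eta> \<delta> U j0"
    using exists_cells[OF \<eta>(1) \<delta>] by blast
  then interpret cells: kernel_cells K \<mu>s \<mu> m Pz Pl C N v \<eta> \<delta> U j0 .
  define A where "A = K - (\<Union>i<N. U i)"
  have "openin (top_of_set K) (\<Union>i<N. U i)" using cells.cell_open by blast
  then have A_closed: "closed A" unfolding A_def by (rule openin_K(3))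
  obtain r where r: "r > 0" "measure \<mu> (closed_nbhd A r) < \<delta>"
    using measure_closed_nbhd_less[OF lim_fin lim_sets A_closed, of \<delta>] cells.uncovered_null \<delta>
    unfolding A_def by auto
  have v_bound: "\<bar>v i\<bar> \<le> C + 2" if "i < N" for i using v_range[OF that] \<eta> by auto
  obtain g where g: "continuous_on K g" "g \<in> borel_measurable borel" "\<And>x. \<bar>g x\<bar> \<le> C + 2"
    "interpolates (K - closed_nbhd A r) N U v g"
    unfolding A_def by (rule continuous_interpolant[of K N U v "C + 2" r]) (use K_closed cells.cell_open v_bound C r in auto)
  define F where "F = K \<inter> closed_nbhd A r"
  have F: "closedin (top_of_set K) F" "F \<in> sets borel"
    unfolding F_def using closed_nbhd_closed[of A r] K_closed
    by (auto intro: closedin_closed_Int)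
  have gF: "interpolates (K - F) N U v g" using g(4) by (simp add: F_def Diff_Int)
  have "measure \<mu> F \<le> measure \<mu> (closed_nbhd A r)"
    using borel_closed[OF closed_nbhd_closed] lim_sets by (intro L.finite_measure_mono) (auto simp: F_def)
  with r(2) have F_small: "measure \<mu> F < \<delta>" by simp
  show ?thesis
  proof (rule that[OF g(1-3)])
    show "\<forall>\<^sub>F j in sequentially. measure (\<mu>s j) {x \<in> msupp (\<mu>s j). \<bar>Pz j x - g x\<bar> > 2*\<eta>} \<le> \<tau>"
      using cells.approximation_j[OF F(1) gF]
    proof eventually_elim
      case (elim j)
      have "(real N + 2) * \<delta> \<le> (2 * real N * real N + real N + 2) * \<delta>"
        using \<delta> by (intro mult_right_mono) auto
      then show ?case using elim F_small \<delta>_mult by (simp add: algebra_simps)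
    qed
    have "real N * real N * (2 * \<delta>) + \<delta> \<le> (2 * real N * real N + real N + 2) * \<delta>"
      using \<delta> by (simp add: algebra_simps)
    then show "measure (completion \<mu>) {x \<in> msupp \<mu>. \<bar>Pl x - g x\<bar> > 3*\<eta>} \<le> \<tau>"
      using cells.approximation_lim[OF F(2) gF] F_small \<delta>_mult by (simp add: algebra_simps)
  qed
qed

end

section \<open>Convergence of the kernel integrals\<close>

context weakly_convergent
begin

lemma eventually_Lp_bounded:
  assumes p: "p > 1" and Lp: "lp_norm_seq p \<mu>s \<phi> < \<infinity>"
    and meas: "\<And>j. j \<ge> 1 \<Longrightarrow> (\<lambda>x. indicator (msupp (\<mu>s j)) x * \<phi> j x) \<in> borel_measurable borel"
  obtains Q where "Q \<ge> 0" "\<forall>\<^sub>F j in sequentially.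
    integrable (\<mu>s j) (\<lambda>x. \<bar>indicator (msupp (\<mu>s j)) x * \<phi> j x\<bar> powr p) \<and>
    (\<integral>x. \<bar>indicator (msupp (\<mu>s j)) x * \<phi> j x\<bar> powr p \<partial>\<mu>s j) \<le> Q"
proof -
  obtain L where "lp_norm_seq p \<mu>s \<phi> < ereal L" using Lp ereal_dense2 by blast
  then have "\<forall>\<^sub>F j in sequentially. lp_norm p (\<mu>s j) (msupp (\<mu>s j)) (\<phi> j) < ereal L"
    unfolding lp_norm_seq_def by (rule Limsup_lessD)
  then have "\<forall>\<^sub>F j in sequentially.
    integrable (\<mu>s j) (\<lambda>x. \<bar>indicator (msupp (\<mu>s j)) x * \<phi> j x\<bar> powr p) \<and>
    (\<integral>x. \<bar>indicator (msupp (\<mu>s j)) x * \<phi> j x\<bar> powr p \<partial>\<mu>s j) \<le> L powr p"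
    using eventually_ge_at_top[of 1]
    by eventually_elim (use lp_norm_integral_bound p meas measurable_j in blast)
  then show ?thesis by (intro that[of "L powr p"]) simp_all
qed

end

context strong_kernel
begin

lemma kernel_error_j:
  fixes j :: nat and \<eta> :: real and \<phi> g :: "'a \<Rightarrow> real"
  defines "f \<equiv> \<lambda>x. indicator (msupp (\<mu>s j)) x * \<phi> x"
    and "B \<equiv> {x \<in> msupp (\<mu>s j). \<bar>Pz j x - g x\<bar> > \<eta>}"
  assumes j: "j > m" and fi: "integrable (\<mu>s j) f"
    and g: "g \<in> borel_measurable borel" "\<And>x. \<bar>g x\<bar> \<le> C + 2" and \<eta>: "\<eta> \<ge> 0"
  shows "B \<in> sets (\<mu>s j)"
    "\<bar>(\<integral>x. indicator (msupp (\<mu>s j)) x * Pz j x * \<phi> x \<partial>\<mu>s j)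
       - (\<integral>x. indicator (msupp (\<mu>s j)) x * g x * \<phi> x \<partial>\<mu>s j)\<bar>
     \<le> \<eta> * (\<integral>x. \<bar>f x\<bar> \<partial>\<mu>s j) + (2 * C + 2) * (\<integral>x. indicator B x * \<bar>f x\<bar> \<partial>\<mu>s j)"
proof -
  define S where "S = msupp (\<mu>s j)"
  have j1: "j \<ge> 1" using j by simp
  have [measurable]: "S \<in> sets borel" "(\<lambda>x. indicator S x * Pz j x) \<in> borel_measurable borel"
    using supp_j(2)[OF j1] Pz_ind_meas[OF j] by (simp_all add: S_def)
  note [measurable] = g(1)
  have P_meas: "(\<lambda>x. indicator S x * Pz j x) \<in> borel_measurable (\<mu>s j)"
    and g_meas: "(\<lambda>x. indicator S x * g x) \<in> borel_measurable (\<mu>s j)"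
    by (simp_all add: measurable_j[OF j1])
  have diff: "\<bar>indicator S x * Pz j x - indicator S x * g x\<bar> \<le> 2 * C + 2" for x
    using Pz_bound[OF j, of x] g(2)[of x] C by (cases "x \<in> S") (auto simp: S_def)
  have B_eq: "{x \<in> space (\<mu>s j). \<bar>indicator S x * Pz j x - indicator S x * g x\<bar> > \<eta>} = B"
    using \<eta> by (auto simp: B_def S_def space_j[OF j1] indicator_def)
  have "{x \<in> space borel. \<bar>indicator S x * Pz j x - indicator S x * g x\<bar> > \<eta>} \<in> sets borel"
    by measurable
  moreover have "{x \<in> space borel. \<bar>indicator S x * Pz j x - indicator S x * g x\<bar> > \<eta>} = B"
    using B_eq space_j[OF j1] by simp
  ultimately show "B \<in> sets (\<mu>s j)" using meas_sets[OF j1] by metis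
  have ind: "(\<integral>x. indicator S x * h x * \<phi> x \<partial>\<mu>s j) = (\<integral>x. (indicator S x * h x) * f x \<partial>\<mu>s j)" for h
    by (rule Bochner_Integration.integral_cong) (auto simp: f_def S_def indicator_def)
  have gS: "\<bar>indicator S x * g x\<bar> \<le> C + 2" for x
    using g(2)[of x] C by (cases "x \<in> S") auto
  have "\<bar>(\<integral>x. indicator (msupp (\<mu>s j)) x * Pz j x * \<phi> x \<partial>\<mu>s j)
       - (\<integral>x. indicator (msupp (\<mu>s j)) x * g x * \<phi> x \<partial>\<mu>s j)\<bar>
     = \<bar>(\<integral>x. (indicator S x * Pz j x) * f x \<partial>\<mu>s j) - (\<integral>x. (indicator S x * g x) * f x \<partial>\<mu>s j)\<bar>"
    using ind[of "Pz j"] ind[of g] by (simp add: S_def)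
  also have "\<dots> \<le> \<eta> * (\<integral>x. \<bar>f x\<bar> \<partial>\<mu>s j) + (2 * C + 2) * (\<integral>x. indicator B x * \<bar>f x\<bar> \<partial>\<mu>s j)"
    using integral_kernel_difference(3)[OF fi P_meas g_meas gS AE_I2[OF diff] \<eta>, unfolded B_eq] .
  finally show "\<bar>(\<integral>x. indicator (msupp (\<mu>s j)) x * Pz j x * \<phi> x \<partial>\<mu>s j)
       - (\<integral>x. indicator (msupp (\<mu>s j)) x * g x * \<phi> x \<partial>\<mu>s j)\<bar>
     \<le> \<eta> * (\<integral>x. \<bar>f x\<bar> \<partial>\<mu>s j) + (2 * C + 2) * (\<integral>x. indicator B x * \<bar>f x\<bar> \<partial>\<mu>s j)" .
qed

text \<open>Error made in the limit when Pl is replaced by a bounded g; here |Pl| \<le> C + 1 only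
  almost everywhere.\<close>
lemma kernel_error_lim:
  fixes \<eta> :: real and \<phi> g :: "'a \<Rightarrow> real"
  defines "f \<equiv> \<lambda>x. indicator (msupp \<mu>) x * \<phi> x"
    and "B \<equiv> {x \<in> msupp \<mu>. \<bar>Pl x - g x\<bar> > \<eta>}"
  assumes fi: "integrable (completion \<mu>) f"
    and g: "g \<in> borel_measurable borel" "\<And>x. \<bar>g x\<bar> \<le> C + 2" and \<eta>: "\<eta> \<ge> 0"
  shows "B \<in> sets (completion \<mu>)"
    "\<bar>(\<integral>x. indicator (msupp \<mu>) x * Pl x * \<phi> x \<partial>completion \<mu>)
       - (\<integral>x. indicator (msupp \<mu>) x * g x * \<phi> x \<partial>completion \<mu>)\<bar>
     \<le> \<eta> * (\<integral>x. \<bar>f x\<bar> \<partial>completion \<mu>) + (2 * C + 3) * (\<integral>x. indicator B x * \<bar>f x\<bar> \<partial>completion \<mu>)"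
proof -
  define S where "S = msupp \<mu>"
  have [measurable]: "S \<in> sets (completion \<mu>)" "(\<lambda>x. indicator S x * Pl x) \<in> borel_measurable (completion \<mu>)"
    using supp_lim(2) lim_sets Pl_ind_meas by (simp_all add: S_def)
  have [measurable]: "g \<in> borel_measurable (completion \<mu>)"
    using measurable_completion[OF measurable_lim[OF g(1)]] .
  have diff: "AE x in completion \<mu>. \<bar>indicator S x * Pl x - indicator S x * g x\<bar> \<le> 2 * C + 3"
  proof (rule AE_I'[OF Pl_bound_ae])
    show "{x \<in> space (completion \<mu>). \<not> \<bar>indicator S x * Pl x - indicator S x * g x\<bar> \<le> 2 * C + 3}
        \<subseteq> {x \<in> msupp \<mu>. \<not> \<bar>Pl x\<bar> \<le> C + 1}"
    proof
      fix x assume x: "x \<in> {x \<in> space (completion \<mu>). \<not> \<bar>indicator S x * Pl x - indicator S x * g x\<bar> \<le> 2 * C + 3}"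
      then have "x \<in> S" using C by (cases "x \<in> S") auto
      with x have "\<bar>Pl x - g x\<bar> > 2 * C + 3" by simp
      with g(2)[of x] \<open>x \<in> S\<close> show "x \<in> {x \<in> msupp \<mu>. \<not> \<bar>Pl x\<bar> \<le> C + 1}"
        by (auto simp: S_def)
    qed
  qed
  have B_eq: "{x \<in> space (completion \<mu>). \<bar>indicator S x * Pl x - indicator S x * g x\<bar> > \<eta>} = B"
    using \<eta> by (auto simp: B_def S_def space_lim indicator_def)
  have "{x \<in> space (completion \<mu>). \<bar>indicator S x * Pl x - indicator S x * g x\<bar> > \<eta>} \<in> sets (completion \<mu>)"
    by measurable
  then show "B \<in> sets (completion \<mu>)" using B_eq by simp
  have ind: "(\<integral>x. indicator S x * h x * \<phi> x \<partial>completion \<mu>)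
      = (\<integral>x. (indicator S x * h x) * f x \<partial>completion \<mu>)" for h
    by (rule Bochner_Integration.integral_cong) (auto simp: f_def S_def indicator_def)
  have gS: "\<bar>indicator S x * g x\<bar> \<le> C + 2" for x
    using g(2)[of x] C by (cases "x \<in> S") auto
  have "\<bar>(\<integral>x. indicator (msupp \<mu>) x * Pl x * \<phi> x \<partial>completion \<mu>)
       - (\<integral>x. indicator (msupp \<mu>) x * g x * \<phi> x \<partial>completion \<mu>)\<bar>
     = \<bar>(\<integral>x. (indicator S x * Pl x) * f x \<partial>completion \<mu>)
       - (\<integral>x. (indicator S x * g x) * f x \<partial>completion \<mu>)\<bar>"
    using ind[of Pl] ind[of g] by (simp add: S_def)
  also have "\<dots> \<le> \<eta> * (\<integral>x. \<bar>f x\<bar> \<partial>completion \<mu>) + (2 * C + 3) * (\<integral>x. indicator B x * \<bar>f x\<bar> \<partial>completion \<mu>)"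
    using integral_kernel_difference(3)[OF fi _ _ gS diff \<eta>, unfolded B_eq] by simp
  finally show "\<bar>(\<integral>x. indicator (msupp \<mu>) x * Pl x * \<phi> x \<partial>completion \<mu>)
       - (\<integral>x. indicator (msupp \<mu>) x * g x * \<phi> x \<partial>completion \<mu>)\<bar>
     \<le> \<eta> * (\<integral>x. \<bar>f x\<bar> \<partial>completion \<mu>) + (2 * C + 3) * (\<integral>x. indicator B x * \<bar>f x\<bar> \<partial>completion \<mu>)" .
qed


text \<open>Along the sequence, the error of replacing Pz j by a bounded g is controlled uniformly
  in g: an eventual L^p bound makes the \<phi>_j uniformly integrable, so bad sets of measure \<le> \<tau>
  contribute at most (2C + 2) \<kappa>.\<close>
lemma kernel_error_j_uniform:
  assumes p: "p > 1" and Lp: "lp_norm_seq p \<mu>s \<phi> < \<infinity>"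
    and meas: "\<And>j. j \<ge> 1 \<Longrightarrow> (\<lambda>x. indicator (msupp (\<mu>s j)) x * \<phi> j x) \<in> borel_measurable borel"
    and \<kappa>: "\<kappa> > 0"
  obtains Q \<tau> where "Q \<ge> 0" "\<tau> > 0"
    "\<And>g \<eta>. g \<in> borel_measurable borel \<Longrightarrow> (\<And>x. \<bar>g x\<bar> \<le> C + 2) \<Longrightarrow> \<eta> \<ge> 0 \<Longrightarrow>
      \<forall>\<^sub>F j in sequentially. measure (\<mu>s j) {x \<in> msupp (\<mu>s j). \<bar>Pz j x - g x\<bar> > \<eta>} \<le> \<tau> \<Longrightarrow>
      \<forall>\<^sub>F j in sequentially. \<bar>(\<integral>\<zeta>. indicator (msupp (\<mu>s j)) \<zeta> * Pz j \<zeta> * \<phi> j \<zeta> \<partial>\<mu>s j)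
        - (\<integral>\<zeta>. indicator (msupp (\<mu>s j)) \<zeta> * g \<zeta> * \<phi> j \<zeta> \<partial>\<mu>s j)\<bar>
      \<le> \<eta> * (measure \<mu> K + 1 + Q) + (2 * C + 2) * \<kappa>"
proof -
  define f where "f j x = indicator (msupp (\<mu>s j)) x * \<phi> j x" for j x
  obtain Q where Q: "Q \<ge> 0" and Q_ev: "\<forall>\<^sub>F j in sequentially.
      integrable (\<mu>s j) (\<lambda>x. \<bar>f j x\<bar> powr p) \<and> (\<integral>x. \<bar>f j x\<bar> powr p \<partial>\<mu>s j) \<le> Q"
    unfolding f_def by (rule eventually_Lp_bounded[OF p Lp meas])
  obtain \<tau> where \<tau>: "\<tau> > 0" and ui: "\<And>(M :: 'a measure) f B. finite_measure M \<Longrightarrow>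
       f \<in> borel_measurable M \<Longrightarrow> integrable M (\<lambda>x. \<bar>f x\<bar> powr p) \<Longrightarrow>
       (\<integral>x. \<bar>f x\<bar> powr p \<partial>M) \<le> Q \<Longrightarrow> B \<in> sets M \<Longrightarrow> measure M B \<le> \<tau> \<Longrightarrow>
       (\<integral>x. indicator B x * \<bar>f x\<bar> \<partial>M) \<le> \<kappa>"
    using Lp_uniformly_integrable[OF p Q \<kappa>] by blast
  show ?thesis
  proof (rule that[OF Q \<tau>])
    fix g :: "'a \<Rightarrow> real" and \<eta> :: real
    assume g: "g \<in> borel_measurable borel" "\<And>x. \<bar>g x\<bar> \<le> C + 2" and \<eta>: "\<eta> \<ge> 0"
      and small: "\<forall>\<^sub>F j in sequentially. measure (\<mu>s j) {x \<in> msupp (\<mu>s j). \<bar>Pz j x - g x\<bar> > \<eta>} \<le> \<tau>"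
    show "\<forall>\<^sub>F j in sequentially. \<bar>(\<integral>\<zeta>. indicator (msupp (\<mu>s j)) \<zeta> * Pz j \<zeta> * \<phi> j \<zeta> \<partial>\<mu>s j)
        - (\<integral>\<zeta>. indicator (msupp (\<mu>s j)) \<zeta> * g \<zeta> * \<phi> j \<zeta> \<partial>\<mu>s j)\<bar>
      \<le> \<eta> * (measure \<mu> K + 1 + Q) + (2 * C + 2) * \<kappa>"
      using Q_ev eventually_total_mass_le small eventually_gt_at_top[of m]
    proof eventually_elim
      case (elim j)
      then have j1: "j \<ge> 1" and ip: "integrable (\<mu>s j) (\<lambda>x. \<bar>f j x\<bar> powr p)"
        and iQ: "(\<integral>x. \<bar>f j x\<bar> powr p \<partial>\<mu>s j) \<le> Q" by auto
      have fin: "finite_measure (\<mu>s j)" by (rule meas_fin[OF j1])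
      have fm: "f j \<in> borel_measurable (\<mu>s j)"
        using measurable_j[OF j1 meas[OF j1]] by (simp add: f_def[abs_def])
      note L = Lp_set_integral_bound[OF fin fm ip iQ _ p, of 1]
      note E = kernel_error_j[OF elim(4) L(1)[simplified, unfolded f_def] g \<eta>]
      have "(\<integral>x. indicator {x \<in> msupp (\<mu>s j). \<bar>Pz j x - g x\<bar> > \<eta>} x * \<bar>f j x\<bar> \<partial>\<mu>s j) \<le> \<kappa>"
        using ui[OF fin fm ip iQ E(1)] elim(3) by simp
      moreover have "(\<integral>x. \<bar>f j x\<bar> \<partial>\<mu>s j) \<le> measure \<mu> K + 1 + Q"
        using L(3) elim(2) by simp
      ultimately show ?case
        using E(2) \<eta> C unfolding f_def by (smt (verit) mult_left_mono)
    qed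
  qed
qed

text \<open>In the limit, the error of replacing Pl by a bounded g is controlled uniformly in g by
  the absolute continuity of the integral of |\<phi>s|.\<close>
lemma kernel_error_lim_uniform:
  assumes fi: "integrable (completion \<mu>) (\<lambda>x. indicator (msupp \<mu>) x * \<phi>s x)" and \<kappa>: "\<kappa> > 0"
  obtains \<tau> where "\<tau> > 0"
    "\<And>g \<eta>. g \<in> borel_measurable borel \<Longrightarrow> (\<And>x. \<bar>g x\<bar> \<le> C + 2) \<Longrightarrow> \<eta> \<ge> 0 \<Longrightarrow>
      measure (completion \<mu>) {x \<in> msupp \<mu>. \<bar>Pl x - g x\<bar> > \<eta>} < \<tau> \<Longrightarrow>
      \<bar>(\<integral>\<zeta>. indicator (msupp \<mu>) \<zeta> * Pl \<zeta> * \<phi>s \<zeta> \<partial>completion \<mu>)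
        - (\<integral>\<zeta>. indicator (msupp \<mu>) \<zeta> * g \<zeta> * \<phi>s \<zeta> \<partial>completion \<mu>)\<bar>
      \<le> \<eta> * (\<integral>x. \<bar>indicator (msupp \<mu>) x * \<phi>s x\<bar> \<partial>completion \<mu>) + (2 * C + 3) * \<kappa>"
proof -
  obtain \<tau> where \<tau>: "\<tau> > 0" and ac: "\<And>B. B \<in> sets (completion \<mu>) \<Longrightarrow> measure (completion \<mu>) B < \<tau> \<Longrightarrow>
      (\<integral>x. indicator B x * \<bar>indicator (msupp \<mu>) x * \<phi>s x\<bar> \<partial>completion \<mu>) \<le> \<kappa>"
    using set_integral_small[OF finite_completion fi \<kappa>] by blast
  show ?thesis
  proof (rule that[OF \<tau>])
    fix g :: "'a \<Rightarrow> real" and \<eta> :: real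
    assume g: "g \<in> borel_measurable borel" "\<And>x. \<bar>g x\<bar> \<le> C + 2" and \<eta>: "\<eta> \<ge> 0"
      and small: "measure (completion \<mu>) {x \<in> msupp \<mu>. \<bar>Pl x - g x\<bar> > \<eta>} < \<tau>"
    note E = kernel_error_lim[OF fi g \<eta>]
    show "\<bar>(\<integral>\<zeta>. indicator (msupp \<mu>) \<zeta> * Pl \<zeta> * \<phi>s \<zeta> \<partial>completion \<mu>)
        - (\<integral>\<zeta>. indicator (msupp \<mu>) \<zeta> * g \<zeta> * \<phi>s \<zeta> \<partial>completion \<mu>)\<bar>
      \<le> \<eta> * (\<integral>x. \<bar>indicator (msupp \<mu>) x * \<phi>s x\<bar> \<partial>completion \<mu>) + (2 * C + 3) * \<kappa>"
      using E(2) ac[OF E(1) small] C by (smt (verit) mult_left_mono)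
  qed
qed

text \<open>Given \<epsilon>, the error bounds
  above fix the admissible measure \<tau> of the bad sets, the continuous approximation at the
  scale \<eta> then yields g, and the integrals against g converge by weak convergence.\<close>
lemma kernel_integrals_tendsto:
  assumes p: "p > 1" and Lp: "lp_norm_seq p \<mu>s \<phi> < \<infinity>"
    and meas: "\<And>j. j \<ge> 1 \<Longrightarrow> (\<lambda>x. indicator (msupp (\<mu>s j)) x * \<phi> j x) \<in> borel_measurable borel"
    and weak: "has_weak_limit_values K \<mu>s \<mu> \<phi> \<phi>s"
  shows "(\<lambda>j. \<integral>\<zeta>. indicator (msupp (\<mu>s j)) \<zeta> * Pz j \<zeta> * \<phi> j \<zeta> \<partial>\<mu>s j)
    \<longlonglongrightarrow> (\<integral>\<zeta>. indicator (msupp \<mu>) \<zeta> * Pl \<zeta> * \<phi>s \<zeta> \<partial>completion \<mu>)"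
proof (rule tendstoI)
  fix \<epsilon> :: real assume \<epsilon>: "\<epsilon> > 0"
  have cancel: "a / (8 * s) * s = a / 8" if "s \<noteq> 0" for a s :: real using that by simp
  have fi: "integrable (completion \<mu>) (\<lambda>x. indicator (msupp \<mu>) x * \<phi>s x)"
    using weak by (simp add: has_weak_limit_values_def)
  define \<kappa> where "\<kappa> = \<epsilon> / (8 * (2 * C + 3))"
  have "\<kappa> * (2 * C + 3) = \<epsilon> / 8" unfolding \<kappa>_def by (rule cancel) (use C in linarith)
  then have \<kappa>: "\<kappa> > 0" "(2 * C + 3) * \<kappa> = \<epsilon> / 8" using \<epsilon> C by (simp_all add: \<kappa>_def mult.commute)
  obtain Q \<tau>1 where Q: "Q \<ge> 0" and \<tau>1: "\<tau>1 > 0" and err_j: "\<And>g \<eta>. g \<in> borel_measurable borel \<Longrightarrow>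
      (\<And>x. \<bar>g x\<bar> \<le> C + 2) \<Longrightarrow> \<eta> \<ge> 0 \<Longrightarrow>
      \<forall>\<^sub>F j in sequentially. measure (\<mu>s j) {x \<in> msupp (\<mu>s j). \<bar>Pz j x - g x\<bar> > \<eta>} \<le> \<tau>1 \<Longrightarrow>
      \<forall>\<^sub>F j in sequentially. \<bar>(\<integral>\<zeta>. indicator (msupp (\<mu>s j)) \<zeta> * Pz j \<zeta> * \<phi> j \<zeta> \<partial>\<mu>s j)
        - (\<integral>\<zeta>. indicator (msupp (\<mu>s j)) \<zeta> * g \<zeta> * \<phi> j \<zeta> \<partial>\<mu>s j)\<bar>
      \<le> \<eta> * (measure \<mu> K + 1 + Q) + (2 * C + 2) * \<kappa>"
    using kernel_error_j_uniform[OF p Lp meas \<kappa>(1)] by blast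
  obtain \<tau>2 where \<tau>2: "\<tau>2 > 0" and err_lim: "\<And>g \<eta>. g \<in> borel_measurable borel \<Longrightarrow>
      (\<And>x. \<bar>g x\<bar> \<le> C + 2) \<Longrightarrow> \<eta> \<ge> 0 \<Longrightarrow>
      measure (completion \<mu>) {x \<in> msupp \<mu>. \<bar>Pl x - g x\<bar> > \<eta>} < \<tau>2 \<Longrightarrow>
      \<bar>(\<integral>\<zeta>. indicator (msupp \<mu>) \<zeta> * Pl \<zeta> * \<phi>s \<zeta> \<partial>completion \<mu>)
        - (\<integral>\<zeta>. indicator (msupp \<mu>) \<zeta> * g \<zeta> * \<phi>s \<zeta> \<partial>completion \<mu>)\<bar>
      \<le> \<eta> * (\<integral>x. \<bar>indicator (msupp \<mu>) x * \<phi>s x\<bar> \<partial>completion \<mu>) + (2 * C + 3) * \<kappa>"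
    using kernel_error_lim_uniform[OF fi \<kappa>(1)] by blast
  define S where "S = measure \<mu> K + 1 + Q + (\<integral>x. \<bar>indicator (msupp \<mu>) x * \<phi>s x\<bar> \<partial>completion \<mu>)"
  have S: "S \<ge> 1" using Q by (simp add: S_def)
  define \<eta> where "\<eta> = min 1 (\<epsilon> / (8 * S))"
  have \<eta>: "0 < \<eta>" "\<eta> \<le> 1" using \<epsilon> S by (simp_all add: \<eta>_def)
  have "\<eta> * S \<le> \<epsilon> / (8 * S) * S" using S by (intro mult_right_mono) (auto simp: \<eta>_def)
  with cancel[of S \<epsilon>] S have \<eta>S: "\<eta> * S \<le> \<epsilon> / 8" by simp
  obtain g where g: "continuous_on K g" "g \<in> borel_measurable borel" "\<And>x. \<bar>g x\<bar> \<le> C + 2"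
    and g_j: "\<forall>\<^sub>F j in sequentially. measure (\<mu>s j) {x \<in> msupp (\<mu>s j). \<bar>Pz j x - g x\<bar> > 2*\<eta>} \<le> min \<tau>1 (\<tau>2 / 2)"
    and g_lim: "measure (completion \<mu>) {x \<in> msupp \<mu>. \<bar>Pl x - g x\<bar> > 3*\<eta>} \<le> min \<tau>1 (\<tau>2 / 2)"
    using continuous_approximation[OF \<eta>, of "min \<tau>1 (\<tau>2 / 2)"] \<tau>1 \<tau>2 by auto
  have j_err: "\<forall>\<^sub>F j in sequentially. \<bar>(\<integral>\<zeta>. indicator (msupp (\<mu>s j)) \<zeta> * Pz j \<zeta> * \<phi> j \<zeta> \<partial>\<mu>s j)
        - (\<integral>\<zeta>. indicator (msupp (\<mu>s j)) \<zeta> * g \<zeta> * \<phi> j \<zeta> \<partial>\<mu>s j)\<bar>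
      \<le> 2 * \<eta> * (measure \<mu> K + 1 + Q) + (2 * C + 2) * \<kappa>"
    using g_j by (intro err_j[OF g(2,3)]) (use \<eta> in \<open>auto elim: eventually_mono\<close>)
  have lim_err: "\<bar>(\<integral>\<zeta>. indicator (msupp \<mu>) \<zeta> * Pl \<zeta> * \<phi>s \<zeta> \<partial>completion \<mu>)
        - (\<integral>\<zeta>. indicator (msupp \<mu>) \<zeta> * g \<zeta> * \<phi>s \<zeta> \<partial>completion \<mu>)\<bar>
      \<le> 3 * \<eta> * (\<integral>x. \<bar>indicator (msupp \<mu>) x * \<phi>s x\<bar> \<partial>completion \<mu>) + (2 * C + 3) * \<kappa>"
    using g_lim \<eta> \<tau>2 by (intro err_lim[OF g(2,3)]) auto
  have weak_err: "\<forall>\<^sub>F j in sequentially. dist (\<integral>\<zeta>. indicator (msupp (\<mu>s j)) \<zeta> * g \<zeta> * \<phi> j \<zeta> \<partial>\<mu>s j)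
      (\<integral>\<zeta>. indicator (msupp \<mu>) \<zeta> * g \<zeta> * \<phi>s \<zeta> \<partial>completion \<mu>) < \<epsilon> / 4"
  proof (rule tendstoD)
    show "(\<lambda>j. \<integral>\<zeta>. indicator (msupp (\<mu>s j)) \<zeta> * g \<zeta> * \<phi> j \<zeta> \<partial>\<mu>s j)
      \<longlonglongrightarrow> (\<integral>\<zeta>. indicator (msupp \<mu>) \<zeta> * g \<zeta> * \<phi>s \<zeta> \<partial>completion \<mu>)"
      using weak g(1) unfolding has_weak_limit_values_def by blast
  qed (use \<epsilon> in simp)
  show "\<forall>\<^sub>F j in sequentially. dist (\<integral>\<zeta>. indicator (msupp (\<mu>s j)) \<zeta> * Pz j \<zeta> * \<phi> j \<zeta> \<partial>\<mu>s j)
      (\<integral>\<zeta>. indicator (msupp \<mu>) \<zeta> * Pl \<zeta> * \<phi>s \<zeta> \<partial>completion \<mu>) < \<epsilon>"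
    using j_err weak_err
  proof eventually_elim
    case (elim j)
    have "2 * \<eta> * (measure \<mu> K + 1 + Q) + 3 * \<eta> * (\<integral>x. \<bar>indicator (msupp \<mu>) x * \<phi>s x\<bar> \<partial>completion \<mu>)
        \<le> 3 * (\<eta> * S)"
      using \<eta> Q by (simp add: S_def algebra_simps)
    moreover have "(2 * C + 2) * \<kappa> \<le> \<epsilon> / 8" using \<kappa> C by (smt (verit) mult_right_mono)
    ultimately show ?case
      using elim lim_err \<eta>S \<kappa>(2) unfolding dist_real_def by argo
  qed
qed

end

lemma borel_measurable_section:
  fixes F :: "'a::topological_space \<Rightarrow> 'b::topological_space \<Rightarrow> real"
  assumes F: "(\<lambda>(z, \<zeta>). F z \<zeta>) \<in> borel_measurable (restrict_space borel (A \<times> B))" and z: "z \<in> A"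
  shows "F z \<in> borel_measurable (restrict_space borel B)"
proof -
  have "(\<lambda>\<zeta>. (z, \<zeta>)) \<in> restrict_space borel B \<rightarrow>\<^sub>M restrict_space borel (A \<times> B)"
    using z by (intro measurable_restrict_space3 borel_measurable_continuous_onI continuous_intros) auto
  from measurable_compose[OF this F] show ?thesis by simp
qed

theorem theorem4p4:
  fixes K :: "'a::metric_space set"
    and \<mu>s :: "nat \<Rightarrow> 'a measure" and \<mu> :: "'a measure"
    and P :: "nat \<Rightarrow> 'a \<Rightarrow> 'a \<Rightarrow> real" and Plim :: "'a \<Rightarrow> 'a \<Rightarrow> real"
    and \<phi> :: "nat \<Rightarrow> 'a \<Rightarrow> real" and \<phi>s :: "'a \<Rightarrow> real" and p :: real
  assumes K: "compact K"
    and meas_sets: "\<And>j. j \<ge> 1 \<Longrightarrow> sets (\<mu>s j) = sets borel"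
    and meas_fin: "\<And>j. j \<ge> 1 \<Longrightarrow> finite_measure (\<mu>s j)"
    and meas_on_K: "\<And>j. j \<ge> 1 \<Longrightarrow> emeasure (\<mu>s j) (- K) = 0"
    and lim_sets: "sets \<mu> = sets borel"
    and lim_fin: "finite_measure \<mu>"
    and lim_on_K: "emeasure \<mu> (- K) = 0"
    and weak_conv: "\<And>h :: 'a \<Rightarrow> real. continuous_on K h \<Longrightarrow>
        (\<lambda>j. \<integral>x. indicator K x * h x \<partial>(\<mu>s j)) \<longlonglongrightarrow> (\<integral>x. indicator K x * h x \<partial>\<mu>)"
    and P_borel: "\<And>j. j \<ge> 1 \<Longrightarrow> (\<lambda>(z, \<zeta>). P j z \<zeta>) \<in>
        borel_measurable (restrict_space borel ((\<Union>m\<in>{1..<j}. msupp (\<mu>s m)) \<times> msupp (\<mu>s j)))"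
    and P_bdd: "\<And>m z. m \<ge> 1 \<Longrightarrow> z \<in> msupp (\<mu>s m) \<Longrightarrow>
        \<exists>C. \<forall>j>m. \<forall>\<zeta>\<in>msupp (\<mu>s j). \<bar>P j z \<zeta>\<bar> \<le> C"
    and P_strong: "\<And>m z. m \<ge> 1 \<Longrightarrow> z \<in> msupp (\<mu>s m) \<Longrightarrow>
        has_strong_limit_values K \<mu>s \<mu> m (\<lambda>j. P j z) (Plim z)"
    and p: "p > 1"
    and \<phi>_borel: "\<And>j. j \<ge> 1 \<Longrightarrow> \<phi> j \<in> borel_measurable (restrict_space borel (msupp (\<mu>s j)))"
    and \<phi>_Ap: "in_Ap p K \<mu>s \<mu> \<phi>"
    and \<phi>_weak: "has_weak_limit_values K \<mu>s \<mu> \<phi> \<phi>s"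
    and sub: "\<And>j m z. 1 \<le> m \<Longrightarrow> m < j \<Longrightarrow> z \<in> msupp (\<mu>s m) \<Longrightarrow>
        \<phi> m z \<le> (\<integral>\<zeta>. indicator (msupp (\<mu>s j)) \<zeta> * P j z \<zeta> * \<phi> j \<zeta> \<partial>(\<mu>s j))"
    and m: "m \<ge> 1" and z: "z \<in> msupp (\<mu>s m)"
  shows "\<phi> m z \<le> (\<integral>\<zeta>. indicator (msupp \<mu>) \<zeta> * Plim z \<zeta> * \<phi>s \<zeta> \<partial>(completion \<mu>))"
proof -
  have wc: "weakly_convergent K \<mu>s \<mu>"
    using K meas_sets meas_fin meas_on_K lim_sets lim_fin lim_on_K weak_conv
    by (rule weakly_convergent.intro)
  interpret weakly_convergent K \<mu>s \<mu> by (rule wc)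
  obtain C where C: "C \<ge> 0" "\<And>j \<zeta>. j > m \<Longrightarrow> \<zeta> \<in> msupp (\<mu>s j) \<Longrightarrow> \<bar>P j z \<zeta>\<bar> \<le> C"
    using P_bdd[OF m z] by (metis order.trans max.cobounded1 max.cobounded2)
  have "P j z \<in> borel_measurable (restrict_space borel (msupp (\<mu>s j)))" if "j > m" for j
  proof (rule borel_measurable_section[OF P_borel])
    show "z \<in> (\<Union>m'\<in>{1..<j}. msupp (\<mu>s m'))" using z m that by auto
  qed (use m that in simp)
  then interpret strong_kernel K \<mu>s \<mu> m "\<lambda>j. P j z" "Plim z" C
    using C P_strong[OF m z] by (intro strong_kernel.intro[OF wc] strong_kernel_axioms.intro) auto
  have \<phi>_meas: "(\<lambda>x. indicator (msupp (\<mu>s j)) x * \<phi> j x) \<in> borel_measurable borel" if "j \<ge> 1" for j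
    using borel_measurable_restrict_space_iff[of "msupp (\<mu>s j)" borel "\<phi> j"] \<phi>_borel[OF that]
      supp_j(2)[OF that] by simp
  have "lp_norm_seq p \<mu>s \<phi> < \<infinity>" using \<phi>_Ap by (simp add: in_Ap_def)
  from kernel_integrals_tendsto[OF p this \<phi>_meas \<phi>_weak]
  show ?thesis
  proof (rule tendsto_lowerbound)
    show "\<forall>\<^sub>F j in sequentially. \<phi> m z \<le> (\<integral>\<zeta>. indicator (msupp (\<mu>s j)) \<zeta> * P j z \<zeta> * \<phi> j \<zeta> \<partial>\<mu>s j)"
      using eventually_gt_at_top[of m] by eventually_elim (rule sub[OF m _ z])
  qed simp_all
qed

end
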